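(* Let $n_1,n_2\ge0$, $n=n_1+n_2+1$, and let $\psi_i:N_i\to\mathbb{S}^{2n_i+1}$ ($i=1,2$) be C-minimal Legendrian immersions of $n_i$-dimensional Riemannian manifolds $N_i$. For any $\delta\in(0,\pi/2)$, writing $c_\delta=\cos\delta$, $s_\delta=\sin\delta$, the map \[\phi_\delta:\mathbb{R}\times N_1\times N_2\to\mathbb{S}^{2n+1},\quad \phi_\delta(t,p,q)=\big(c_\delta\exp(i\,s_\delta^{n_1+1}c_\delta^{n_2-1}t)\,\psi_1(p),\ s_\delta\exp(-i\,s_\delta^{n_1-1}c_\delta^{n_2+1}t)\,\psi_2(q)\big)\] is a C-minimal Legendrian immersion. In particular, if $\psi_1,\psi_2$ are minimal Legendrian immersions and $\delta_0=\arctan\sqrt{(n_2+1)/(n_1+1)}$, then $\phi_{\delta_0}$ is minimal.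
   Context: $\mathbb{C}^{m}$ carries the metric $\langle v,w\rangle=\Re\sum v_k\bar w_k$ and complex structure $J$ (multiplication by $i$); $\mathbb{S}^{2m-1}$ is the unit sphere with contact form $\Lambda_z(v)=\langle v,Jz\rangle$. An immersion $\phi:M^k\to\mathbb{S}^{2k+1}$ is Legendrian if $\phi^*\Lambda\equiv0$. With the induced metric and $H=\frac1k\operatorname{trace}\sigma$ the mean curvature vector in the sphere, $JH$ is tangent to $M$; $\phi$ is C-minimal if $\operatorname{div}JH=0$. $\mathbb{C}^{n+1}=\mathbb{C}^{n_1+1}\times\mathbb{C}^{n_2+1}$. *)

theory Defs
  imports "HOL-Analysis.Analysis"
begin

text \<open>A point of R^k is a function nat => real vanishing at
indices >= k (product topology on nat => real restricts to the Euclidean topology on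
this slice). A vector of C^m is a function nat => complex, components j < m.\<close>

type_synonym coord = "nat \<Rightarrow> real"
type_synonym cvec = "nat \<Rightarrow> complex"

definition rn :: "nat \<Rightarrow> coord set" where
  "rn k = {x. \<forall>i\<ge>k. x i = 0}"

definition pd :: "nat \<Rightarrow> (coord \<Rightarrow> 'a::real_normed_vector) \<Rightarrow> coord \<Rightarrow> 'a" where
  "pd i f x = vector_derivative (\<lambda>t. f (x(i := t))) (at (x i))"

fun ipd :: "nat list \<Rightarrow> (coord \<Rightarrow> 'a::real_normed_vector) \<Rightarrow> coord \<Rightarrow> 'a" where
  "ipd [] f = f"
| "ipd (i # is) f = pd i (ipd is f)"

definition smooth_on :: "nat \<Rightarrow> coord set \<Rightarrow> (coord \<Rightarrow> 'a::real_normed_vector) \<Rightarrow> bool" where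
  "smooth_on k U f \<longleftrightarrow> (\<forall>is. set is \<subseteq> {..<k} \<longrightarrow>
      continuous_on U (ipd is f) \<and>
      (\<forall>i<k. \<forall>x\<in>U. (\<lambda>t. ipd is f (x(i := t))) differentiable (at (x i))))"

definition vpd :: "nat \<Rightarrow> (coord \<Rightarrow> cvec) \<Rightarrow> coord \<Rightarrow> cvec" where
  "vpd i \<phi> x = (\<lambda>j. pd i (\<lambda>y. \<phi> y j) x)"

definition cinner :: "nat \<Rightarrow> cvec \<Rightarrow> cvec \<Rightarrow> real" where
  "cinner m v w = (\<Sum>j<m. Re (v j * cnj (w j)))"

definition Jc :: "cvec \<Rightarrow> cvec" where
  "Jc v = (\<lambda>j. \<i> * v j)"

definition gmet :: "nat \<Rightarrow> (coord \<Rightarrow> cvec) \<Rightarrow> coord \<Rightarrow> nat \<Rightarrow> nat \<Rightarrow> real" where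
  "gmet m \<phi> x a b = cinner m (vpd a \<phi> x) (vpd b \<phi> x)"

definition ginv :: "nat \<Rightarrow> nat \<Rightarrow> (coord \<Rightarrow> cvec) \<Rightarrow> coord \<Rightarrow> nat \<Rightarrow> nat \<Rightarrow> real" where
  "ginv k m \<phi> x = (THE G. (\<forall>a<k. \<forall>b<k. (\<Sum>c<k. gmet m \<phi> x a c * G c b) = (if a = b then 1 else 0))
                         \<and> (\<forall>a b. k \<le> a \<or> k \<le> b \<longrightarrow> G a b = 0))"

definition immersion :: "nat \<Rightarrow> nat \<Rightarrow> coord set \<Rightarrow> (coord \<Rightarrow> cvec) \<Rightarrow> bool" where
  "immersion k m U \<phi> \<longleftrightarrow> U \<subseteq> rn k \<and> openin (top_of_set (rn k)) U \<and>
     (\<forall>j<m. smooth_on k U (\<lambda>x. \<phi> x j)) \<and>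
     (\<forall>x\<in>U. \<forall>c::nat \<Rightarrow> real. (\<forall>j<m. (\<Sum>a<k. of_real (c a) * vpd a \<phi> x j) = 0)
                \<longrightarrow> (\<forall>a<k. c a = 0))"

text \<open>Legendrian: image in the unit sphere of C^m and phi^* Lambda = 0, Lambda_z(v) = <v, Jz>\<close>
definition legendrian :: "nat \<Rightarrow> nat \<Rightarrow> coord set \<Rightarrow> (coord \<Rightarrow> cvec) \<Rightarrow> bool" where
  "legendrian k m U \<phi> \<longleftrightarrow> (\<forall>x\<in>U. cinner m (\<phi> x) (\<phi> x) = 1 \<and>
      (\<forall>a<k. cinner m (vpd a \<phi> x) (Jc (\<phi> x)) = 0))"

text \<open>tangential projection onto span of d_a phi, and projection onto the normal bundle of M in the sphere\<close>
definition tanproj :: "nat \<Rightarrow> nat \<Rightarrow> (coord \<Rightarrow> cvec) \<Rightarrow> coord \<Rightarrow> cvec \<Rightarrow> cvec" where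
  "tanproj k m \<phi> x v = (\<lambda>j. \<Sum>a<k. \<Sum>b<k.
      of_real (ginv k m \<phi> x a b * cinner m v (vpd b \<phi> x)) * vpd a \<phi> x j)"

definition nproj :: "nat \<Rightarrow> nat \<Rightarrow> (coord \<Rightarrow> cvec) \<Rightarrow> coord \<Rightarrow> cvec \<Rightarrow> cvec" where
  "nproj k m \<phi> x v = (\<lambda>j. v j - tanproj k m \<phi> x v j - of_real (cinner m v (\<phi> x)) * \<phi> x j)"

definition sff :: "nat \<Rightarrow> nat \<Rightarrow> (coord \<Rightarrow> cvec) \<Rightarrow> coord \<Rightarrow> nat \<Rightarrow> nat \<Rightarrow> cvec" where
  "sff k m \<phi> x a b = nproj k m \<phi> x (vpd a (vpd b \<phi>) x)"

definition mcurv :: "nat \<Rightarrow> nat \<Rightarrow> (coord \<Rightarrow> cvec) \<Rightarrow> coord \<Rightarrow> cvec" where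
  "mcurv k m \<phi> x = (\<lambda>j. of_real (1 / real k) *
      (\<Sum>a<k. \<Sum>b<k. of_real (ginv k m \<phi> x a b) * sff k m \<phi> x a b j))"

text \<open>coordinates X^a of the tangent vector field JH = X^a d_a phi\<close>
definition JHcoord :: "nat \<Rightarrow> nat \<Rightarrow> (coord \<Rightarrow> cvec) \<Rightarrow> nat \<Rightarrow> coord \<Rightarrow> real" where
  "JHcoord k m \<phi> a x = (\<Sum>b<k. ginv k m \<phi> x a b * cinner m (Jc (mcurv k m \<phi> x)) (vpd b \<phi> x))"

definition christoffel :: "nat \<Rightarrow> nat \<Rightarrow> (coord \<Rightarrow> cvec) \<Rightarrow> coord \<Rightarrow> nat \<Rightarrow> nat \<Rightarrow> nat \<Rightarrow> real" where
  "christoffel k m \<phi> x a b c = (1/2) * (\<Sum>l<k. ginv k m \<phi> x a l *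
      (pd b (\<lambda>y. gmet m \<phi> y l c) x + pd c (\<lambda>y. gmet m \<phi> y l b) x - pd l (\<lambda>y. gmet m \<phi> y b c) x))"

definition divJH :: "nat \<Rightarrow> nat \<Rightarrow> (coord \<Rightarrow> cvec) \<Rightarrow> coord \<Rightarrow> real" where
  "divJH k m \<phi> x = (\<Sum>a<k. pd a (JHcoord k m \<phi> a) x +
      (\<Sum>b<k. christoffel k m \<phi> x a a b * JHcoord k m \<phi> b x))"

definition C_minimal :: "nat \<Rightarrow> nat \<Rightarrow> coord set \<Rightarrow> (coord \<Rightarrow> cvec) \<Rightarrow> bool" where
  "C_minimal k m U \<phi> \<longleftrightarrow> (\<forall>x\<in>U. divJH k m \<phi> x = 0)"

definition minimal :: "nat \<Rightarrow> nat \<Rightarrow> coord set \<Rightarrow> (coord \<Rightarrow> cvec) \<Rightarrow> bool" where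
  "minimal k m U \<phi> \<longleftrightarrow> (\<forall>x\<in>U. \<forall>j<m. mcurv k m \<phi> x j = 0)"

text \<open>Legendrian immersion psi : N^k -> S^(2k+1) in C^(k+1), given in a chart U of N\<close>
definition C_minimal_legendrian_immersion :: "nat \<Rightarrow> coord set \<Rightarrow> (coord \<Rightarrow> cvec) \<Rightarrow> bool" where
  "C_minimal_legendrian_immersion k U \<phi> \<longleftrightarrow>
     immersion k (k+1) U \<phi> \<and> legendrian k (k+1) U \<phi> \<and> C_minimal k (k+1) U \<phi>"

definition minimal_legendrian_immersion :: "nat \<Rightarrow> coord set \<Rightarrow> (coord \<Rightarrow> cvec) \<Rightarrow> bool" where
  "minimal_legendrian_immersion k U \<phi> \<longleftrightarrow>
     immersion k (k+1) U \<phi> \<and> legendrian k (k+1) U \<phi> \<and> minimal k (k+1) U \<phi>"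

text \<open>Coordinates (t,p,q) on R x R^n1 x R^n2 = R^(n1+n2+1): x 0 = t, x (1+a) = p a, x (1+n1+b) = q b\<close>
definition split1 :: "nat \<Rightarrow> coord \<Rightarrow> coord" where
  "split1 n1 x = (\<lambda>a. if a < n1 then x (Suc a) else 0)"

definition split2 :: "nat \<Rightarrow> nat \<Rightarrow> coord \<Rightarrow> coord" where
  "split2 n1 n2 x = (\<lambda>b. if b < n2 then x (Suc (n1 + b)) else 0)"

definition prod_dom :: "nat \<Rightarrow> nat \<Rightarrow> coord set \<Rightarrow> coord set \<Rightarrow> coord set" where
  "prod_dom n1 n2 U1 U2 = {x \<in> rn (n1 + n2 + 1). split1 n1 x \<in> U1 \<and> split2 n1 n2 x \<in> U2}"

definition phi_delta :: "nat \<Rightarrow> nat \<Rightarrow> real \<Rightarrow> (coord \<Rightarrow> cvec) \<Rightarrow> (coord \<Rightarrow> cvec) \<Rightarrow> coord \<Rightarrow> cvec" where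
  "phi_delta n1 n2 \<delta> \<psi>1 \<psi>2 x = (\<lambda>j.
     if j < n1 + 1 then
       of_real (cos \<delta>) * exp (\<i> * of_real (sin \<delta> powi (int n1 + 1) * cos \<delta> powi (int n2 - 1) * x 0))
         * \<psi>1 (split1 n1 x) j
     else
       of_real (sin \<delta>) * exp (- \<i> * of_real (sin \<delta> powi (int n1 - 1) * cos \<delta> powi (int n2 + 1) * x 0))
         * \<psi>2 (split2 n1 n2 x) (j - (n1 + 1)))"

end

theory Submission
  imports Defs "Jordan_Normal_Form.Determinant"
begin

(*
  In the coordinates (t, p, q) the map is
    phi (t, p, q) = (c e^(i w1 t) psi1 p, s e^(-i w2 t) psi2 q),
  with c = cos delta, s = sin delta, w1 = s^(n1+1) c^(n2-1) and w2 = s^(n1-1) c^(n2+1).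
  All partial derivatives of phi have this form again, with psi1 and psi2 replaced by their
  derivatives or multiplied by i w1 and -i w2. Hence the induced metric is block diagonal, with
  blocks g_tt = w1^2 c^2 + w2^2 s^2, c^2 g1 and s^2 g2: the t-direction is orthogonal to the two
  factors because psi1 and psi2 are Legendrian. The exponents are chosen so that w1 c^2 = w2 s^2,
  which is exactly the condition <d_t phi, J phi> = 0 making phi Legendrian.

  Splitting g^ab d_a d_b phi into its tangential and normal parts, one finds that the t-component
  of JH does not depend on t, while its components along N1 and N2 are n1 / (n c^2) and
  n2 / (n s^2) times those of JH for psi1 and psi2; the contracted Christoffel symbols split in
  the same way. Thus div JH for phi is a combination of div JH for psi1 and psi2, and phi is
  C-minimal whenever psi1 and psi2 are. If psi1 and psi2 are minimal, the mean curvature of phi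
  is a multiple of (psi1, 0) plus a multiple of (0, psi2), and both coefficients vanish exactly
  when c^2 = (n1 + 1) / (n + 1), i.e. when tan delta = sqrt ((n2 + 1) / (n1 + 1)).
*)

section \<open>Partial derivatives along coordinate lines\<close>

definition has_pd :: "nat \<Rightarrow> coord \<Rightarrow> (coord \<Rightarrow> 'a::real_normed_vector) \<Rightarrow> 'a \<Rightarrow> bool" where
  "has_pd i x F D \<longleftrightarrow> ((\<lambda>t. F (x(i:=t))) has_vector_derivative D) (at (x i))"

lemma has_pd_imp_pd_eq: "has_pd i x F D \<Longrightarrow> pd i F x = D"
  unfolding has_pd_def pd_def by (rule vector_derivative_at)

lemma has_pd_of_differentiable: "(\<lambda>t. F (x(i:=t))) differentiable (at (x i)) \<Longrightarrow> has_pd i x F (pd i F x)"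
  unfolding has_pd_def pd_def by (simp add: vector_derivative_works[symmetric])

lemma has_pd_imp_differentiable: "has_pd i x F D \<Longrightarrow> (\<lambda>t. F (x(i:=t))) differentiable (at (x i))"
  unfolding has_pd_def differentiable_def has_vector_derivative_def by blast

lemma has_pd_const[simp]: "has_pd i x (\<lambda>y. K) 0"
  unfolding has_pd_def by simp

lemma has_pd_diff: "has_pd i x F D \<Longrightarrow> has_pd i x G D' \<Longrightarrow> has_pd i x (\<lambda>y. F y - G y) (D - D')"
  unfolding has_pd_def by (intro derivative_intros)

lemma has_pd_mult: "has_pd i x F D \<Longrightarrow> has_pd i x G D' \<Longrightarrow>
   has_pd i x (\<lambda>y. F y * G y) (F x * D' + D * (G x :: 'a::real_normed_algebra))"
  unfolding has_pd_def using has_vector_derivative_mult[of "\<lambda>t. F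
      (x(i:=t))" D "x i" UNIV "\<lambda>t. G (x(i:=t))" D']
  by simp

lemma has_pd_cmult: "has_pd i x F D \<Longrightarrow> has_pd i x (\<lambda>y. c * F y) (c * (D::'a::real_normed_algebra))"
  unfolding has_pd_def by (rule has_vector_derivative_mult_right)

lemma has_pd_sum: "(\<And>a. a \<in> A \<Longrightarrow> has_pd i x (F a) (D a)) \<Longrightarrow> has_pd i x (\<lambda>y. \<Sum>a\<in>A. F a y) (\<Sum>a\<in>A. D a)"
  unfolding has_pd_def by (rule has_vector_derivative_sum) auto

lemma has_pd_cnj: "has_pd i x F D \<Longrightarrow> has_pd i x (\<lambda>y. cnj (F y)) (cnj D)"
  unfolding has_pd_def by (rule has_vector_derivative_cnj)

lemma has_pd_Re: "has_pd i x F D \<Longrightarrow> has_pd i x (\<lambda>y. Re (F y)) (Re D)"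
  unfolding has_pd_def has_vector_derivative_def
  by (drule bounded_linear.has_derivative[OF bounded_linear_Re]) simp

lemma has_pd_of_real: "has_pd i x F D \<Longrightarrow> has_pd i x (\<lambda>y. of_real (F y) :: complex) (of_real D)"
  unfolding has_pd_def has_vector_derivative_def
  by (drule bounded_linear.has_derivative[OF bounded_linear_of_real]) (simp add: scaleR_conv_of_real)

lemma has_pd_cinner:
  assumes "\<And>j. j < m \<Longrightarrow> has_pd i x (\<lambda>y. F y j) (D j)"
    and "\<And>j. j < m \<Longrightarrow> has_pd i x (\<lambda>y. G y j) (D' j)"
  shows "has_pd i x (\<lambda>y. cinner m (F y) (G y)) (cinner m D (G x) + cinner m (F x) D')"
proof -
  have "has_pd i x (\<lambda>y. \<Sum>j<m. Re (F y j * cnj (G y j))) (\<Sum>j<m. Re (F x j * cnj (D' j) + D j * cnj (G x j)))"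
    by (intro has_pd_sum has_pd_Re has_pd_mult has_pd_cnj assms) auto
  thus ?thesis unfolding cinner_def by (simp add: sum.distrib algebra_simps)
qed

lemma has_pd_unique: "has_pd i x F D \<Longrightarrow> has_pd i x F D' \<Longrightarrow> D = D'"
  using has_pd_imp_pd_eq by metis

lemma rn_fun_upd: "x \<in> rn k \<Longrightarrow> i < k \<Longrightarrow> x(i:=t) \<in> rn k"
  unfolding rn_def by auto

lemma continuous_on_fun_upd_line: "continuous_on UNIV (\<lambda>t::real. (x::coord)(i:=t))"
  apply (intro continuous_on_coordinatewise_then_product)
  subgoal for j by (cases "j = i") (auto simp: fun_upd_def)
  done

lemma open_line_section:
  assumes "openin (top_of_set (rn k)) S" "i < k" "x \<in> S"
  shows "open {t. x(i:=t) \<in> S}" "x i \<in> {t. x(i:=t) \<in> S}"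
proof -
  obtain Op where O: "open Op" "S = rn k \<inter> Op" using assms(1) by (auto simp: openin_open)
  have xr: "x \<in> rn k" using assms O by auto
  have "{t. x(i:=t) \<in> S} = (\<lambda>t. x(i:=t)) -` Op"
    using O rn_fun_upd[OF xr assms(2)] by auto
  moreover have "open ((\<lambda>t. x(i:=t)) -` Op)"
    using open_vimage[OF O(1) continuous_on_fun_upd_line] .
  ultimately show "open {t. x(i:=t) \<in> S}" by simp
  show "x i \<in> {t. x(i:=t) \<in> S}" using assms by simp
qed

lemma has_pd_cong_open:
  assumes "openin (top_of_set (rn k)) S" "i < k" "x \<in> S" "\<And>y. y \<in> S \<Longrightarrow> F y = G y" "has_pd i x F D"
  shows "has_pd i x G D"
  using assms(5) unfolding has_pd_def
  by (rule has_vector_derivative_transform_within_open[OF _ open_line_section(1)[OF assms(1-3)]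
      open_line_section(2)[OF assms(1-3)]])
     (simp add: assms(4))

lemma pd_cong_open:
  assumes "openin (top_of_set (rn k)) S" "i < k" "x \<in> S" "\<And>y. y \<in> S \<Longrightarrow> F y = G y"
  shows "pd i F x = pd i G x"
proof -
  have ev: "\<forall>\<^sub>F t in nhds (x i). t \<in> UNIV \<longrightarrow> F (x(i:=t)) = G (x(i:=t))"
    using open_line_section[OF assms(1-3)] assms(4) unfolding eventually_nhds by blast
  show ?thesis unfolding pd_def
    by (rule vector_derivative_cong_eq[OF ev]) auto
qed

lemma has_pd_const_on_line:
  assumes "\<And>t. F (x(i:=t)) = K"
  shows "has_pd i x F 0"
proof -
  have "(\<lambda>t. F (x(i:=t))) = (\<lambda>t. K)" using assms by auto
  thus ?thesis unfolding has_pd_def by simp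
qed

definition pd_differentiable :: "nat \<Rightarrow> coord \<Rightarrow> (coord \<Rightarrow> 'a::real_normed_vector) \<Rightarrow> bool" where
  "pd_differentiable i x F \<longleftrightarrow> (\<exists>D. has_pd i x F D)"

lemma pd_differentiable_has_pd: "pd_differentiable i x F \<Longrightarrow> has_pd i x F (pd i F x)"
  unfolding pd_differentiable_def using has_pd_imp_pd_eq by metis

lemma pd_differentiableI: "has_pd i x F D \<Longrightarrow> pd_differentiable i x F"
  unfolding pd_differentiable_def by blast

lemma pd_differentiable_const[simp]: "pd_differentiable i x (\<lambda>y. K)"
  using has_pd_const pd_differentiableI by blast

lemma pd_differentiable_diff: "pd_differentiable i x F \<Longrightarrow> pd_differentiable i x G
    \<Longrightarrow> pd_differentiable i x (\<lambda>y. F y - G y)"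
  unfolding pd_differentiable_def using has_pd_diff by blast

lemma pd_differentiable_mult: "pd_differentiable i x F \<Longrightarrow> pd_differentiable i x G
    \<Longrightarrow> pd_differentiable i x (\<lambda>y. F y * (G y :: 'a::real_normed_algebra))"
  unfolding pd_differentiable_def using has_pd_mult by blast

lemma pd_differentiable_sum: "(\<And>a. a \<in> A \<Longrightarrow> pd_differentiable i x (F a))
    \<Longrightarrow> pd_differentiable i x (\<lambda>y. \<Sum>a\<in>A. F a y)"
  unfolding pd_differentiable_def using has_pd_sum by metis

lemma pd_differentiable_cnj: "pd_differentiable i x F \<Longrightarrow> pd_differentiable i x (\<lambda>y. cnj (F y))"
  unfolding pd_differentiable_def using has_pd_cnj by blast

lemma pd_differentiable_Re: "pd_differentiable i x F \<Longrightarrow> pd_differentiable i x (\<lambda>y. Re (F y))"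
  unfolding pd_differentiable_def using has_pd_Re by blast

lemma pd_differentiable_of_real: "pd_differentiable i x F
    \<Longrightarrow> pd_differentiable i x (\<lambda>y. of_real (F y) :: complex)"
  unfolding pd_differentiable_def using has_pd_of_real by blast

lemma pd_differentiable_cinner:
  assumes "\<And>j. j < m \<Longrightarrow> pd_differentiable i x (\<lambda>y. F y j)"
    and "\<And>j. j < m \<Longrightarrow> pd_differentiable i x (\<lambda>y. G y j)"
  shows "pd_differentiable i x (\<lambda>y. cinner m (F y) (G y))"
  unfolding cinner_def by (intro pd_differentiable_sum pd_differentiable_Re pd_differentiable_mult
      pd_differentiable_cnj assms) auto

lemma pd_differentiable_prod: "finite A \<Longrightarrow> (\<And>a. a \<in> A \<Longrightarrow> pd_differentiable i x (F a))
    \<Longrightarrow> pd_differentiable i x (\<lambda>y. \<Prod>a\<in>A. (F a y :: real))"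
proof (induction A rule: finite_induct)
  case empty thus ?case by simp
next
  case (insert a A) thus ?case by (simp add: pd_differentiable_mult)
qed

lemma pd_differentiable_inverse: "pd_differentiable i x F \<Longrightarrow> F x \<noteq> 0
    \<Longrightarrow> pd_differentiable i x (\<lambda>y. inverse (F y :: real))"
  unfolding pd_differentiable_def has_pd_def
  apply (auto simp: has_real_derivative_iff_has_vector_derivative[symmetric])
  subgoal for D using DERIV_inverse_fun[of "\<lambda>t. F (x(i := t))" D "x i" UNIV] by auto
  done

lemma pd_differentiable_divide: "pd_differentiable i x F \<Longrightarrow> pd_differentiable i x G \<Longrightarrow> G x \<noteq> 0
    \<Longrightarrow> pd_differentiable i x (\<lambda>y. F y / (G y :: real))"
  unfolding divide_inverse by (intro pd_differentiable_mult pd_differentiable_inverse)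

lemma pd_differentiable_cong_open:
  assumes "openin (top_of_set (rn k)) S" "i < k" "x \<in> S" "\<And>y. y \<in> S \<Longrightarrow> F y = G y" "pd_differentiable i x F"
  shows "pd_differentiable i x G"
  using assms has_pd_cong_open unfolding pd_differentiable_def by metis

section \<open>Inverting a matrix given as a function\<close>

text \<open>Cramer's rule writes the inverse metric as a rational function of the metric; this is how
  the partial differentiability of \<open>ginv\<close>, and hence of \<open>JHcoord\<close>, is obtained.\<close>

definition det_fn :: "nat \<Rightarrow> (nat \<Rightarrow> nat \<Rightarrow> real) \<Rightarrow> real" where
  "det_fn n e = (\<Sum>p \<in> {p. p permutes {0..<n}}. of_int (sign p) * (\<Prod>i = 0..<n. e i (p i)))"

definition adj_fn :: "nat \<Rightarrow> (nat \<Rightarrow> nat \<Rightarrow> real) \<Rightarrow> nat \<Rightarrow> nat \<Rightarrow> real" where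
  "adj_fn n e a b = (-1)^(b+a) * det_fn (n-1) (\<lambda>i' j'. e (if i' < b then i' else Suc i')
      (if j' < a then j' else Suc j'))"

definition inv_fn :: "nat \<Rightarrow> (nat \<Rightarrow> nat \<Rightarrow> real) \<Rightarrow> nat \<Rightarrow> nat \<Rightarrow> real" where
  "inv_fn n e a b = (if a < n \<and> b < n then adj_fn n e a b / det_fn n e else 0)"

lemma det_mat_eq_det_fn: "Determinant.det (Matrix.mat n n (\<lambda>(a,b). e a b)) = det_fn n e"
  unfolding det_fn_def by (subst det_def'[of _ n]) (auto intro!: sum.cong prod.cong simp: permutes_def)

lemma adj_mat_eq_adj_fn: "a < n \<Longrightarrow> b < n \<Longrightarrow> adj_mat (Matrix.mat n n (\<lambda>(a,b). e a b)) $$ (a,b) = adj_fn n e a b"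
proof -
  assume ab: "a < n" "b < n"
  have "mat_delete (Matrix.mat n n (\<lambda>(a,b). e a b)) b a = Matrix.mat (n-1) (n-1)
     (\<lambda>(i',j'). e (if i' < b then i' else Suc i') (if j' < a then j' else Suc j'))"
    unfolding mat_delete_def by (rule eq_matI) auto
  thus ?thesis using ab unfolding adj_mat_def adj_fn_def cofactor_def
    by (simp add: det_mat_eq_det_fn[symmetric])
qed

lemma inv_fn_right:
  assumes inj: "\<And>v. (\<forall>a<n. (\<Sum>c<n. e a c * v c) = 0) \<Longrightarrow> (\<forall>a<n. v a = 0)"
  shows "det_fn n e \<noteq> 0" "\<And>a b. a < n \<Longrightarrow> b < n \<Longrightarrow> (\<Sum>c<n. e a c * inv_fn n e c b) = (if a = b then 1 else 0)"
proof -
  let ?M = "Matrix.mat n n (\<lambda>(a,b). e a b)"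
  have M: "?M \<in> carrier_mat n n" by simp
  show d: "det_fn n e \<noteq> 0"
  proof
    assume "det_fn n e = 0"
    then obtain v where v: "v \<in> carrier_vec n" "v \<noteq> 0\<^sub>v n" "?M *\<^sub>v v = 0\<^sub>v n"
      using det_0_iff_vec_prod_zero[OF M] det_mat_eq_det_fn by metis
    have "\<forall>a<n. (\<Sum>c<n. e a c * (v $ c)) = 0"
    proof (intro allI impI)
      fix a assume a: "a < n"
      have "(?M *\<^sub>v v) $ a = 0" using v(3) a by simp
      thus "(\<Sum>c<n. e a c * (v $ c)) = 0" using a v(1)
        by (simp add: mult_mat_vec_def scalar_prod_def Matrix.row_def atLeast0LessThan)
    qed
    from inj[OF this] have "\<forall>a<n. v $ a = 0" .
    hence "v = 0\<^sub>v n" using v(1) by (intro eq_vecI) auto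
    thus False using v(2) by simp
  qed
  fix a b assume ab: "a < n" "b < n"
  have "(?M * adj_mat ?M) $$ (a,b) = (Determinant.det ?M \<cdot>\<^sub>m 1\<^sub>m n) $$ (a,b)"
    using adj_mat(2)[OF M] by simp
  also have "\<dots> = (if a = b then det_fn n e else 0)" using ab by (simp add: det_mat_eq_det_fn)
  moreover have "(?M * adj_mat ?M) $$ (a,b) = (\<Sum>c<n. e a c * adj_fn n e c b)"
    using ab adj_mat(1)[OF M]
    by (auto simp: scalar_prod_def Matrix.row_def col_def atLeast0LessThan adj_mat_eq_adj_fn intro!: sum.cong)
  ultimately have eq: "(\<Sum>c<n. e a c * adj_fn n e c b) = (if a = b then det_fn n e else 0)"
    by simp
  have "(\<Sum>c<n. e a c * inv_fn n e c b) = (\<Sum>c<n. e a c * adj_fn n e c b) / det_fn n e"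
    unfolding inv_fn_def using ab by (simp add: sum_divide_distrib)
  also have "\<dots> = (if a = b then 1 else 0)" using eq d by simp
  finally show "(\<Sum>c<n. e a c * inv_fn n e c b) = (if a = b then 1 else 0)" .
qed

lemma pd_differentiable_det_fn: "(\<And>a b. a < n \<Longrightarrow> b < n \<Longrightarrow> pd_differentiable i x (\<lambda>y. e y a b))
    \<Longrightarrow> pd_differentiable i x (\<lambda>y. det_fn n (e y))"
  unfolding det_fn_def by (intro pd_differentiable_sum pd_differentiable_mult
      pd_differentiable_prod) (auto simp: permutes_def)

lemma pd_differentiable_adj_fn: "a < n \<Longrightarrow> b < n \<Longrightarrow> (\<And>a b. a < n \<Longrightarrow> b < n
    \<Longrightarrow> pd_differentiable i x (\<lambda>y. e y a b)) \<Longrightarrow> pd_differentiable i x (\<lambda>y. adj_fn n (e y) a b)"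
  unfolding adj_fn_def by (intro pd_differentiable_mult pd_differentiable_const pd_differentiable_det_fn) auto

lemma pd_differentiable_inv_fn: "(\<And>a b. a < n \<Longrightarrow> b < n
    \<Longrightarrow> pd_differentiable i x (\<lambda>y. e y a b)) \<Longrightarrow> det_fn n (e x) \<noteq> 0 \<Longrightarrow>
   pd_differentiable i x (\<lambda>y. inv_fn n (e y) a b)"
  unfolding inv_fn_def by (cases "a < n \<and> b < n")
      (auto intro!: pd_differentiable_divide pd_differentiable_adj_fn pd_differentiable_det_fn)

section \<open>The real inner product on \<open>\<complex>\<^sup>m\<close>\<close>

lemma sum_lessThan_add: fixes n1 n2 :: nat shows "(\<Sum>a<n1+n2. f a) = (\<Sum>a<n1. f a) + (\<Sum>b<n2. f (n1 + b))"
  by (induction n2) (auto simp: add.commute add.left_commute)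

lemma sum_split_coords: fixes n1 n2 :: nat shows "(\<Sum>a<n1+n2+1. f a) = f 0 + (\<Sum>a<n1. f (Suc a))
    + (\<Sum>b<n2. f (Suc (n1 + b)))"
  using sum.lessThan_Suc_shift[of f "n1+n2"] sum_lessThan_add[of "\<lambda>a. f
      (Suc a)" n1 n2] by (simp add: add.assoc)

lemma sum_split_components: fixes n1 n2 :: nat shows "(\<Sum>j<n1+n2+2. f j) = (\<Sum>j<n1+1. f j)
    + (\<Sum>j<n2+1. f (n1 + 1 + j))"
  using sum_lessThan_add[of f "n1+1" "n2+1"] by (simp add: ac_simps numeral_2_eq_2)

lemma cinner_sym: "cinner m v w = cinner m w v"
  unfolding cinner_def by (simp add: mult.commute)

lemma cinner_sum_left: "finite A \<Longrightarrow> cinner m (\<lambda>j. \<Sum>a\<in>A. V a j) W = (\<Sum>a\<in>A. cinner m (V a) W)"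
  unfolding cinner_def by (simp add: sum_distrib_right Re_sum sum.swap[of _ A])

lemma cinner_self_zero: assumes "cinner m w w = 0" "j < m" shows "w j = 0"
proof -
  have e: "\<And>j. Re (w j * cnj (w j)) = (cmod (w j))^2"
    by (metis Re_complex_of_real complex_norm_square)
  have "\<forall>j\<in>{..<m}. (cmod (w j))^2 = 0"
    using assms(1) unfolding cinner_def e by (subst sum_nonneg_eq_0_iff[symmetric]) auto
  thus ?thesis using assms(2) by auto
qed

lemma cinner_scale_left: "cinner m (\<lambda>j. of_real r * v j) w = r * cinner m v w"
  unfolding cinner_def by (simp add: sum_distrib_left mult.assoc)

lemma cinner_add_left: "cinner m (\<lambda>j. u j + v j) w = cinner m u w + cinner m v w"
  unfolding cinner_def by (simp add: sum.distrib algebra_simps)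

lemma cinner_diff_left: "cinner m (\<lambda>j. u j - v j) w = cinner m u w - cinner m v w"
  unfolding cinner_def by (simp add: sum_subtractf algebra_simps)

lemma cinner_sum_right: "finite A \<Longrightarrow> cinner m W (\<lambda>j. \<Sum>a\<in>A. V a j) = (\<Sum>a\<in>A. cinner m W (V a))"
  by (subst cinner_sym, subst cinner_sum_left) (auto simp: cinner_sym)

lemma cinner_scale_right: "cinner m w (\<lambda>j. of_real r * v j) = r * cinner m w v"
  by (subst cinner_sym, subst cinner_scale_left) (auto simp: cinner_sym)

lemma cinner_cong: "(\<And>j. j < m \<Longrightarrow> v j = v' j) \<Longrightarrow> (\<And>j. j < m \<Longrightarrow> w j = w' j) \<Longrightarrow> cinner m v w = cinner m v' w'"
  unfolding cinner_def by (intro sum.cong) auto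

lemma cinner_split: fixes n1 n2 :: nat shows "cinner (n1+n2+2) v w = cinner (n1+1) v w
    + cinner (n2+1) (\<lambda>j. v (n1+1+j)) (\<lambda>j. w (n1+1+j))"
  unfolding cinner_def by (rule sum_split_components)

lemma cinner_scale_both:
  assumes "z * cnj z' = of_real r"
  shows "cinner n (\<lambda>j. z * u j) (\<lambda>j. z' * w j) = r * cinner n u w"
proof -
  have "\<And>j. Re (z * u j * cnj (z' * w j)) = r * Re (u j * cnj (w j))"
  proof -
    fix j
    have "z * u j * cnj (z' * w j) = (z * cnj z') * (u j * cnj (w j))" by (simp add: algebra_simps)
    also have "\<dots> = of_real r * (u j * cnj (w j))" using assms by (simp only:)
    finally have e: "z * u j * cnj (z' * w j) = of_real r * (u j * cnj (w j))" .
    show "Re (z * u j * cnj (z' * w j)) = r * Re (u j * cnj (w j))" unfolding e by simp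
  qed
  thus ?thesis unfolding cinner_def by (simp add: sum_distrib_left)
qed

lemma cinner_zero_left: "cinner n (\<lambda>j. 0) w = 0" and cinner_zero_right: "cinner n w (\<lambda>j. 0) = 0"
  unfolding cinner_def by auto

lemma cinner_Jc_right_self: "cinner m v (Jc v) = 0"
proof -
  have "\<And>j. Re (v j * cnj (\<i> * v j)) = 0"
    by (simp add: algebra_simps)
  thus ?thesis unfolding cinner_def Jc_def by simp
qed

lemma cinner_Jc_add: "cinner n (Jc (\<lambda>j. X j + Y j)) w = cinner n (Jc X) w + cinner n (Jc Y) w"
  unfolding Jc_def by (simp add: distrib_left cinner_add_left)

lemma cinner_Jc_diff: "cinner n (Jc (\<lambda>j. X j - Y j)) w = cinner n (Jc X) w - cinner n (Jc Y) w"
  unfolding Jc_def by (simp add: right_diff_distrib cinner_diff_left)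

lemma cinner_Jc_scale: "cinner n (Jc (\<lambda>j. of_real r * X j)) w = r * cinner n (Jc X) w"
proof -
  have "Jc (\<lambda>j. of_real r * X j) = (\<lambda>j. of_real r * Jc X j)" unfolding Jc_def by (auto simp: mult_ac)
  thus ?thesis by (simp add: cinner_scale_left)
qed

lemma cinner_Jc_i_scale: "cinner n (Jc (\<lambda>j. \<i> * of_real r * X j)) w = - r * cinner n X w"
proof -
  have "Jc (\<lambda>j. \<i> * of_real r * X j) = (\<lambda>j. of_real (- r) * X j)" unfolding Jc_def
  proof (rule ext)
    fix j
    have "\<i> * (\<i> * of_real r * X j) = (\<i> * \<i>) * (of_real r * X j)" by (simp only: mult_ac)
    thus "\<i> * (\<i> * of_real r * X j) = of_real (- r) * X j" by simp
  qed
  thus ?thesis using cinner_scale_left[of n "- r" X w] by simp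
qed

lemma cinner_i_scale_left: "cinner n (\<lambda>j. \<i> * of_real r * u j) w = r * cinner n w (Jc u)"
proof -
  have "(\<lambda>j. \<i> * of_real r * u j) = (\<lambda>j. of_real r * Jc u j)" by (auto simp: Jc_def mult_ac)
  thus ?thesis using cinner_sym cinner_scale_left by metis
qed

lemma cinner_minus_i_scale_left: "cinner n (\<lambda>j. - \<i> * of_real r * u j) w = - r * cinner n w (Jc u)"
proof -
  have "(\<lambda>j. - \<i> * of_real r * u j) = (\<lambda>j. of_real (- r) * Jc u j)" by (auto simp: Jc_def mult_ac)
  thus ?thesis using cinner_sym cinner_scale_left by metis
qed

lemma i_scale_mult_cnj: "\<i> * of_real r * cnj (\<i> * of_real r) = of_real (r^2)"
  and minus_i_scale_mult_cnj: "- \<i> * of_real r * cnj (- \<i> * of_real r) = of_real (r^2)"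
  by (simp_all add: algebra_simps power2_eq_square)


section \<open>Gram matrices and projections\<close>

definition is_ginv :: "nat \<Rightarrow> nat \<Rightarrow> (coord \<Rightarrow> cvec) \<Rightarrow> coord \<Rightarrow> (nat \<Rightarrow> nat \<Rightarrow> real) \<Rightarrow> bool" where
  "is_ginv k m \<phi> x G \<longleftrightarrow> (\<forall>a<k. \<forall>b<k. (\<Sum>c<k. gmet m \<phi> x a c * G c b) = (if a = b then 1 else 0))
                         \<and> (\<forall>a b. k \<le> a \<or> k \<le> b \<longrightarrow> G a b = 0)"

definition frame_indep :: "nat \<Rightarrow> nat \<Rightarrow> (coord \<Rightarrow> cvec) \<Rightarrow> coord \<Rightarrow> bool" where
  "frame_indep k m \<phi> x \<longleftrightarrow> (\<forall>c::nat \<Rightarrow> real. (\<forall>j<m. (\<Sum>a<k. of_real (c a) * vpd a \<phi> x j) = 0)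
                \<longrightarrow> (\<forall>a<k. c a = 0))"

lemma gram_quadratic_form: "cinner m (\<lambda>j. \<Sum>a<k. of_real (v a) * vpd a \<phi> x j)
    (\<lambda>j. \<Sum>a<k. of_real (v a) * vpd a \<phi> x j)
   = (\<Sum>a<k. v a * (\<Sum>c<k. gmet m \<phi> x a c * v c))"
  by (simp add: cinner_sum_left cinner_sum_right cinner_scale_left cinner_scale_right gmet_def
       sum_distrib_left algebra_simps)

lemma gram_injective:
  assumes "frame_indep k m \<phi> x" "\<forall>a<k. (\<Sum>c<k. gmet m \<phi> x a c * v c) = 0"
  shows "\<forall>a<k. v a = 0"
proof -
  let ?w = "\<lambda>j. \<Sum>a<k. of_real (v a) * vpd a \<phi> x j"
  have "cinner m ?w ?w = 0" unfolding gram_quadratic_form using assms(2) by simp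
  hence "\<forall>j<m. ?w j = 0" using cinner_self_zero by blast
  thus ?thesis using assms(1) unfolding frame_indep_def by blast
qed

lemma ginv_unique:
  assumes "frame_indep k m \<phi> x" "is_ginv k m \<phi> x G"
  shows "ginv k m \<phi> x = G"
proof -
  have uniq: "G' = G" if G': "is_ginv k m \<phi> x G'" for G'
  proof (intro ext)
    fix a b
    show "G' a b = G a b"
    proof (cases "a < k \<and> b < k")
      case True
      have "\<forall>a<k. (\<Sum>c<k. gmet m \<phi> x a c * (G' c b - G c b)) = 0"
        using G' assms(2) True unfolding is_ginv_def by (simp add: algebra_simps sum_subtractf)
      from gram_injective[OF assms(1) this] True show ?thesis by auto
    next
      case False thus ?thesis using G' assms(2) unfolding is_ginv_def by auto
    qed
  qed
  have "ginv k m \<phi> x = (THE G. is_ginv k m \<phi> x G)" unfolding ginv_def is_ginv_def by simp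
  also have "\<dots> = G" by (rule the_equality, rule assms(2), erule uniq)
  finally show ?thesis .
qed

lemma is_ginv_inv_fn:
  assumes "frame_indep k m \<phi> x"
  shows "is_ginv k m \<phi> x (inv_fn k (gmet m \<phi> x))" "det_fn k (gmet m \<phi> x) \<noteq> 0"
proof -
  have inj: "\<And>v. (\<forall>a<k. (\<Sum>c<k. gmet m \<phi> x a c * v c) = 0) \<Longrightarrow> (\<forall>a<k. v a = 0)"
    using gram_injective[OF assms] by blast
  show "is_ginv k m \<phi> x (inv_fn k (gmet m \<phi> x))"
    unfolding is_ginv_def using inv_fn_right(2)[OF inj] by (auto simp: inv_fn_def)
  show "det_fn k (gmet m \<phi> x) \<noteq> 0" using inv_fn_right(1)[OF inj] .
qed

lemma ginv_eq_inv_fn: "frame_indep k m \<phi> x \<Longrightarrow> ginv k m \<phi> x = inv_fn k (gmet m \<phi> x)"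
  using ginv_unique is_ginv_inv_fn by blast

lemma is_ginv_ginv: "frame_indep k m \<phi> x \<Longrightarrow> is_ginv k m \<phi> x (ginv k m \<phi> x)"
  using ginv_eq_inv_fn is_ginv_inv_fn by metis

lemma vpd_eq_ipd: "vpd b \<psi> y j = ipd [b] (\<lambda>y. \<psi> y j) y"
  unfolding vpd_def by simp

lemma vpd2_eq_ipd: "vpd a (vpd b \<psi>) y j = ipd [a,b] (\<lambda>y. \<psi> y j) y"
  unfolding vpd_def by simp
lemma immersion_iff_frame_indep: "immersion k m U \<phi>' \<longleftrightarrow> U \<subseteq> rn k \<and> openin (top_of_set (rn k)) U \<and>
     (\<forall>j<m. smooth_on k U (\<lambda>x. \<phi>' x j)) \<and> (\<forall>x\<in>U. frame_indep k m \<phi>' x)"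
  unfolding immersion_def frame_indep_def ..

lemma tanproj_sum: "finite A \<Longrightarrow> tanproj k m \<phi> x (\<lambda>j. \<Sum>a\<in>A. W a j) j = (\<Sum>a\<in>A. tanproj k m \<phi> x (W a) j)"
  unfolding tanproj_def
  by (simp add: cinner_sum_left sum_distrib_left sum_distrib_right sum.swap[of _ A])

lemma tanproj_scale: "tanproj k m \<phi> x (\<lambda>j. of_real r * W j) j = of_real r * tanproj k m \<phi> x W j"
  unfolding tanproj_def by (simp add: cinner_scale_left sum_distrib_left mult_ac)

lemma nproj_sum: "finite A \<Longrightarrow> nproj k m \<phi> x (\<lambda>j. \<Sum>a\<in>A. W a j) j = (\<Sum>a\<in>A. nproj k m \<phi> x (W a) j)"
  unfolding nproj_def tanproj_sum
  by (simp add: cinner_sum_left sum_subtractf sum_distrib_right)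

lemma nproj_scale: "nproj k m \<phi> x (\<lambda>j. of_real r * W j) j = of_real r * nproj k m \<phi> x W j"
  unfolding nproj_def tanproj_scale by (simp add: cinner_scale_left algebra_simps)

definition hess_trace :: "nat \<Rightarrow> nat \<Rightarrow> (coord \<Rightarrow> cvec) \<Rightarrow> coord \<Rightarrow> cvec" where
  "hess_trace k m \<phi> x = (\<lambda>j. \<Sum>a<k. \<Sum>b<k. of_real (ginv k m \<phi> x a b) * vpd a (vpd b \<phi>) x j)"

lemma mcurv_eq_nproj_hess_trace: "mcurv k m \<phi> x j
    = of_real (1 / real k) * nproj k m \<phi> x (hess_trace k m \<phi> x) j"
proof -
  have "nproj k m \<phi> x (hess_trace k m \<phi> x) j = (\<Sum>a<k. \<Sum>b<k. of_real (ginv k m \<phi> x a b) * sff k m \<phi> x a b j)"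
    unfolding hess_trace_def nproj_sum[OF finite_lessThan] nproj_scale sff_def ..
  thus ?thesis unfolding mcurv_def by simp
qed

definition divJH_term :: "nat \<Rightarrow> nat \<Rightarrow> (coord \<Rightarrow> cvec) \<Rightarrow> coord \<Rightarrow> nat \<Rightarrow> real" where
  "divJH_term k m \<phi> x a = pd a (JHcoord k m \<phi> a) x + (\<Sum>b<k. christoffel k m \<phi> x a a b * JHcoord k m \<phi> b x)"

lemma divJH_eq_sum_divJH_term: "divJH k m \<phi> x = (\<Sum>a<k. divJH_term k m \<phi> x a)"
  unfolding divJH_def divJH_term_def ..

lemma tanproj_add: "tanproj k m \<phi> x (\<lambda>j. X j + Y j) j = tanproj k m \<phi> x X j + tanproj k m \<phi> x Y j"
  unfolding tanproj_def by (simp add: cinner_add_left algebra_simps sum.distrib)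

section \<open>Legendrian charts\<close>

locale chart_immersion =
  fixes k m :: nat and U :: "coord set" and \<psi> :: "coord \<Rightarrow> cvec"
  assumes imm: "immersion k m U \<psi>"
begin

lemma chart_open: "openin (top_of_set (rn k)) U"
  using imm unfolding immersion_def by auto

lemma frame_indep_at: "x \<in> U \<Longrightarrow> frame_indep k m \<psi> x"
  using imm unfolding immersion_def frame_indep_def by blast

lemma has_pd_ipd: "x \<in> U \<Longrightarrow> i < k \<Longrightarrow> j < m \<Longrightarrow> set is \<subseteq> {..<k} \<Longrightarrow>
   has_pd i x (ipd is (\<lambda>y. \<psi> y j)) (ipd (i#is) (\<lambda>y. \<psi> y j) x)"
  using imm unfolding immersion_def smooth_on_def by (auto intro!: has_pd_of_differentiable)

lemma continuous_on_ipd: "j < m \<Longrightarrow> set is \<subseteq> {..<k} \<Longrightarrow> continuous_on U (ipd is (\<lambda>y. \<psi> y j))"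
  using imm unfolding immersion_def smooth_on_def by auto

lemma has_pd_coord: "x \<in> U \<Longrightarrow> i < k \<Longrightarrow> j < m \<Longrightarrow> has_pd i x (\<lambda>y. \<psi> y j) (vpd i \<psi> x j)"
  using has_pd_ipd[of x i j "[]"] by (simp add: vpd_def)

lemma has_pd_vpd: "x \<in> U \<Longrightarrow> i < k \<Longrightarrow> j < m \<Longrightarrow> b < k \<Longrightarrow> has_pd i x (\<lambda>y. vpd b \<psi> y j) (vpd i (vpd b \<psi>) x j)"
  using has_pd_ipd[of x i j "[b]"] by (simp add: vpd_def)

lemma pd_differentiable_vpd2: "x \<in> U \<Longrightarrow> i < k \<Longrightarrow> j < m \<Longrightarrow> a < k \<Longrightarrow> b < k
    \<Longrightarrow> pd_differentiable i x (\<lambda>y. vpd a (vpd b \<psi>) y j)"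
  using has_pd_ipd[of x i j "[a,b]"] unfolding vpd2_eq_ipd by (auto intro: pd_differentiableI)

lemma pd_differentiable_coord: "x \<in> U \<Longrightarrow> i < k \<Longrightarrow> j < m \<Longrightarrow> pd_differentiable i x (\<lambda>y. \<psi> y j)"
  using has_pd_coord pd_differentiableI by blast

lemma pd_differentiable_vpd: "x \<in> U \<Longrightarrow> i < k \<Longrightarrow> j < m \<Longrightarrow> b < k \<Longrightarrow> pd_differentiable i x (\<lambda>y. vpd b \<psi> y j)"
  using has_pd_vpd pd_differentiableI by blast

lemma ginv_right: "x \<in> U \<Longrightarrow> a < k \<Longrightarrow> b < k \<Longrightarrow>
   (\<Sum>c<k. gmet m \<psi> x a c * ginv k m \<psi> x c b) = (if a = b then 1 else 0)"
  using is_ginv_ginv[OF frame_indep_at] unfolding is_ginv_def by blast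

lemma pd_differentiable_gmet: "x \<in> U \<Longrightarrow> i < k \<Longrightarrow> a < k \<Longrightarrow> b < k \<Longrightarrow> pd_differentiable i x (\<lambda>y. gmet m \<psi> y a b)"
  unfolding gmet_def by (intro pd_differentiable_cinner pd_differentiable_vpd) auto

lemma pd_differentiable_ginv: "x \<in> U \<Longrightarrow> i < k \<Longrightarrow> pd_differentiable i x (\<lambda>y. ginv k m \<psi> y a b)"
proof -
  assume x: "x \<in> U" and i: "i < k"
  have "pd_differentiable i x (\<lambda>y. inv_fn k (gmet m \<psi> y) a b)"
    apply (rule pd_differentiable_inv_fn)
     apply (erule (1) pd_differentiable_gmet[OF x i])
    by (rule is_ginv_inv_fn(2)[OF frame_indep_at[OF x]])
  thus ?thesis
    by (rule pd_differentiable_cong_open[OF chart_open i x, rotated])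
      (simp add: ginv_eq_inv_fn[OF frame_indep_at])
qed

lemma pd_differentiable_sff: "x \<in> U \<Longrightarrow> i < k \<Longrightarrow> j < m \<Longrightarrow> a < k \<Longrightarrow> b < k
    \<Longrightarrow> pd_differentiable i x (\<lambda>y. sff k m \<psi> y a b j)"
  unfolding sff_def nproj_def tanproj_def
  by (intro pd_differentiable_diff pd_differentiable_sum pd_differentiable_mult
      pd_differentiable_of_real pd_differentiable_cinner pd_differentiable_vpd2
      pd_differentiable_vpd pd_differentiable_coord pd_differentiable_ginv) auto

lemma pd_differentiable_mcurv: "x \<in> U \<Longrightarrow> i < k \<Longrightarrow> j < m \<Longrightarrow> pd_differentiable i x (\<lambda>y. mcurv k m \<psi> y j)"
  unfolding mcurv_def
  by (intro pd_differentiable_sum pd_differentiable_mult pd_differentiable_of_real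
      pd_differentiable_sff pd_differentiable_ginv pd_differentiable_const) auto

lemma pd_differentiable_JHcoord: "x \<in> U \<Longrightarrow> i < k \<Longrightarrow> pd_differentiable i x (\<lambda>y. JHcoord k m \<psi> a y)"
  unfolding JHcoord_def Jc_def
  by (intro pd_differentiable_sum pd_differentiable_mult pd_differentiable_of_real
      pd_differentiable_cinner pd_differentiable_mcurv pd_differentiable_ginv pd_differentiable_vpd
      pd_differentiable_const) auto

end

locale legendrian_chart = chart_immersion +
  assumes leg: "legendrian k m U \<psi>"
begin

lemma cinner_self_eq_1: "x \<in> U \<Longrightarrow> cinner m (\<psi> x) (\<psi> x) = 1"
  using leg unfolding legendrian_def by blast

lemma cinner_vpd_Jc_self: "x \<in> U \<Longrightarrow> a < k \<Longrightarrow> cinner m (vpd a \<psi> x) (Jc (\<psi> x)) = 0"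
  using leg unfolding legendrian_def by blast

lemma cinner_vpd_self: "x \<in> U \<Longrightarrow> b < k \<Longrightarrow> cinner m (vpd b \<psi> x) (\<psi> x) = 0"
proof -
  assume x: "x \<in> U" and b: "b < k"
  have h: "has_pd b x (\<lambda>y. cinner m (\<psi> y) (\<psi> y)) (cinner m (vpd b \<psi> x) (\<psi> x) + cinner m (\<psi> x) (vpd b \<psi> x))"
    by (intro has_pd_cinner has_pd_coord x b)
  have "has_pd b x (\<lambda>y. cinner m (\<psi> y) (\<psi> y)) 0"
    by (rule has_pd_cong_open[OF chart_open b x, of "\<lambda>y. 1"]) (auto simp: cinner_self_eq_1)
  with h have "cinner m (vpd b \<psi> x) (\<psi> x) + cinner m (\<psi> x) (vpd b \<psi> x) = 0"
    using has_pd_unique by blast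
  thus ?thesis using cinner_sym[of m "vpd b \<psi> x" "\<psi> x"] by linarith
qed

lemma cinner_vpd2_self: "x \<in> U \<Longrightarrow> a < k \<Longrightarrow> b < k \<Longrightarrow>
   cinner m (vpd a (vpd b \<psi>) x) (\<psi> x) = - gmet m \<psi> x b a"
proof -
  assume x: "x \<in> U" and a: "a < k" and b: "b < k"
  have h: "has_pd a x (\<lambda>y. cinner m (vpd b \<psi> y) (\<psi> y)) (cinner m (vpd a (vpd b \<psi>) x) (\<psi> x)
      + cinner m (vpd b \<psi> x) (vpd a \<psi> x))"
    by (intro has_pd_cinner has_pd_coord has_pd_vpd x a b)
  have "has_pd a x (\<lambda>y. cinner m (vpd b \<psi> y) (\<psi> y)) 0"
    by (rule has_pd_cong_open[OF chart_open a x, of "\<lambda>y. 0"]) (auto simp: cinner_vpd_self b)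
  with h have "cinner m (vpd a (vpd b \<psi>) x) (\<psi> x) + cinner m (vpd b \<psi> x) (vpd a \<psi> x) = 0"
    using has_pd_unique by blast
  thus ?thesis unfolding gmet_def by linarith
qed

lemma ginv_gmet_trace: "x \<in> U \<Longrightarrow> (\<Sum>a<k. \<Sum>b<k. ginv k m \<psi> x a b * gmet m \<psi> x b a) = real k"
proof -
  assume x: "x \<in> U"
  have "(\<Sum>a<k. \<Sum>b<k. ginv k m \<psi> x a b * gmet m \<psi> x b a) = (\<Sum>b<k. \<Sum>a<k. gmet m \<psi> x b a * ginv k m \<psi> x a b)"
    by (subst sum.swap) (simp add: mult.commute)
  also have "\<dots> = (\<Sum>b<k. 1)" using ginv_right[OF x] by simp
  finally show ?thesis by simp
qed

lemma cinner_Jc_self_vpd: "x \<in> U \<Longrightarrow> c < k \<Longrightarrow> cinner m (Jc (\<psi> x)) (vpd c \<psi> x) = 0"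
  using cinner_vpd_Jc_self cinner_sym by metis

lemma cinner_self_vpd: "x \<in> U \<Longrightarrow> c < k \<Longrightarrow> cinner m (\<psi> x) (vpd c \<psi> x) = 0"
  using cinner_vpd_self cinner_sym by metis

lemma tanproj_self: "x \<in> U \<Longrightarrow> tanproj k m \<psi> x (\<psi> x) j = 0"
  unfolding tanproj_def by (intro sum.neutral ballI) (simp add: cinner_self_vpd)

lemma cinner_Jc_mcurv_vpd:
  assumes "x \<in> U" and "c < k"
  shows "cinner m (Jc (mcurv k m \<psi> x)) (vpd c \<psi> x) = (1 / real k) *
    (cinner m (Jc (hess_trace k m \<psi> x)) (vpd c \<psi> x)
      - cinner m (Jc (tanproj k m \<psi> x (hess_trace k m \<psi> x))) (vpd c \<psi> x))"
proof -
  have H: "mcurv k m \<psi> x = (\<lambda>j. of_real (1 / real k) * nproj k m \<psi> x (hess_trace k m \<psi> x) j)"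
    by (rule ext) (rule mcurv_eq_nproj_hess_trace)
  show ?thesis unfolding H cinner_Jc_scale nproj_def cinner_Jc_diff
    by (simp add: cinner_Jc_self_vpd assms)
qed

lemma nproj_hess_trace_zero:
  assumes x: "x \<in> U" and mc: "\<forall>j<m. mcurv k m \<psi> x j = 0" and j: "j < m"
  shows "nproj k m \<psi> x (hess_trace k m \<psi> x) j = 0"
proof (cases "k = 0")
  case True
  have "hess_trace k m \<psi> x = (\<lambda>j. 0)" unfolding hess_trace_def True by simp
  thus ?thesis unfolding nproj_def tanproj_def True by (simp add: cinner_zero_left)
next
  case False
  have "of_real (1 / real k) * nproj k m \<psi> x (hess_trace k m \<psi> x) j = 0"
    using mc j mcurv_eq_nproj_hess_trace by metis
  thus ?thesis using False by simp
qed

lemma hess_trace_decomp: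
  assumes x: "x \<in> U" and mc: "\<forall>j<m. mcurv k m \<psi> x j = 0" and j: "j < m"
  shows "hess_trace k m \<psi> x j = tanproj k m \<psi> x (hess_trace k m \<psi> x) j
      + of_real (cinner m (hess_trace k m \<psi> x) (\<psi> x)) * \<psi> x j"
  using nproj_hess_trace_zero[OF x mc j] unfolding nproj_def by (simp add: algebra_simps)

lemma cinner_hess_trace_self: "x \<in> U \<Longrightarrow> cinner m (hess_trace k m \<psi> x) (\<psi> x) = - real k"
proof -
  assume x: "x \<in> U"
  have "cinner m (hess_trace k m \<psi> x) (\<psi> x)
      = (\<Sum>a<k. \<Sum>b<k. ginv k m \<psi> x a b * cinner m (vpd a (vpd b \<psi>) x) (\<psi> x))"
    unfolding hess_trace_def by (simp add: cinner_sum_left cinner_scale_left)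
  also have "\<dots> = (\<Sum>a<k. \<Sum>b<k. - (ginv k m \<psi> x a b * gmet m \<psi> x b a))"
    by (intro sum.cong refl) (simp add: cinner_vpd2_self[OF x])
  also have "\<dots> = - real k" using ginv_gmet_trace[OF x] by (simp add: sum_negf)
  finally show ?thesis .
qed

lemma cinner_tanproj_Jc: "x \<in> U \<Longrightarrow> cinner m (tanproj k m \<psi> x v) (Jc (\<psi> x)) = 0"
  unfolding tanproj_def cinner_sum_left[OF finite_lessThan] cinner_scale_left
  by (intro sum.neutral ballI) (simp add: cinner_vpd_Jc_self)

lemma cinner_hess_trace_Jc:
  assumes x: "x \<in> U" and mc: "\<forall>j<m. mcurv k m \<psi> x j = 0"
  shows "cinner m (hess_trace k m \<psi> x) (Jc (\<psi> x)) = 0"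
proof -
  have "cinner m (hess_trace k m \<psi> x) (Jc (\<psi> x)) = cinner m (\<lambda>j. tanproj k m \<psi> x (hess_trace k m \<psi> x) j
     + of_real (cinner m (hess_trace k m \<psi> x) (\<psi> x)) * \<psi> x j) (Jc (\<psi> x))"
    by (rule cinner_cong) (use hess_trace_decomp[OF x mc] in auto)
  also have "\<dots> = 0"
    unfolding cinner_add_left cinner_scale_left using cinner_tanproj_Jc[OF x] cinner_Jc_right_self[of m "\<psi> x"]
    by simp
  finally show ?thesis .
qed

end

section \<open>Coordinates on the product\<close>

lemma continuous_on_split1: "continuous_on UNIV (split1 n1)"
  unfolding split1_def
  apply (intro continuous_on_coordinatewise_then_product)
  subgoal for a by (cases "a < n1") (auto intro: continuous_on_product_coordinates)
  done

lemma continuous_on_split2: "continuous_on UNIV (split2 n1 n2)"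
  unfolding split2_def
  apply (intro continuous_on_coordinatewise_then_product)
  subgoal for a by (cases "a < n2") (auto intro: continuous_on_product_coordinates)
  done

lemma split1_rn: "split1 n1 x \<in> rn n1" and split2_rn: "split2 n1 n2 x \<in> rn n2"
  unfolding split1_def split2_def rn_def by auto

lemma split1_upd0: "split1 n1 (y(0:=t)) = split1 n1 y"
  and split2_upd0: "split2 n1 n2 (y(0:=t)) = split2 n1 n2 y"
  unfolding split1_def split2_def by auto

lemma split1_upd1: "a < n1 \<Longrightarrow> split1 n1 (y(Suc a:=t)) = (split1 n1 y)(a:=t)"
  unfolding split1_def by auto

lemma split2_upd1: "a < n1 \<Longrightarrow> split2 n1 n2 (y(Suc a:=t)) = split2 n1 n2 y"
  unfolding split2_def by auto

lemma split1_upd2: "n1 < i \<Longrightarrow> split1 n1 (y(i:=t)) = split1 n1 y"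
  unfolding split1_def by auto

lemma split2_upd2: "b < n2 \<Longrightarrow> split2 n1 n2 (y(Suc (n1+b):=t)) = (split2 n1 n2 y)(b:=t)"
  unfolding split2_def by auto

lemma split2_upd3: "i \<le> n1 \<Longrightarrow> 0 < i \<Longrightarrow> split2 n1 n2 (y(i:=t)) = split2 n1 n2 y"
  unfolding split2_def by auto

lemma split1_at: "a < n1 \<Longrightarrow> split1 n1 y a = y (Suc a)"
  unfolding split1_def by auto

lemma split2_at: "b < n2 \<Longrightarrow> split2 n1 n2 y b = y (Suc (n1 + b))"
  unfolding split2_def by auto

lemma has_pd_split1: "a < n1 \<Longrightarrow> has_pd a (split1 n1 y) F D \<Longrightarrow> has_pd (Suc a) y (\<lambda>z. F (split1 n1 z)) D"
  unfolding has_pd_def by (simp add: split1_upd1 split1_at)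

lemma has_pd_split2: "b < n2 \<Longrightarrow> has_pd b (split2 n1 n2 y) F D
    \<Longrightarrow> has_pd (Suc (n1+b)) y (\<lambda>z. F (split2 n1 n2 z)) D"
  unfolding has_pd_def by (simp add: split2_upd2 split2_at)

lemma has_pd_mult_time_factor:
  fixes r :: "real \<Rightarrow> 'a::real_normed_algebra"
  assumes "has_pd 0 y (\<lambda>z. r (z 0)) r'" and "\<And>t. g (y(0 := t)) = g y"
  shows "has_pd 0 y (\<lambda>z. K * r (z 0) * g z) (K * r' * g y)"
proof -
  have "has_pd 0 y (\<lambda>z. K * r (z 0) * g z) (K * r (y 0) * 0 + K * r' * g y)"
    by (intro has_pd_mult has_pd_cmult assms(1) has_pd_const_on_line) (simp add: assms(2))
  thus ?thesis by simp
qed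

lemma has_pd_mult_time_factor_other:
  fixes r :: "real \<Rightarrow> 'a::real_normed_algebra"
  assumes "i \<noteq> 0" and "has_pd i y g g'"
  shows "has_pd i y (\<lambda>z. K * r (z 0) * g z) (K * r (y 0) * g')"
proof -
  have "has_pd i y (\<lambda>z. K * r (z 0) * g z) (K * r (y 0) * g' + 0 * g y)"
    by (intro has_pd_mult assms(2) has_pd_const_on_line) (simp add: assms(1))
  thus ?thesis by simp
qed

lemma has_pd_exp_time:
  "has_pd 0 y (\<lambda>z. exp (\<i> * of_real (A * z 0))) (\<i> * of_real A * exp (\<i> * of_real (A * y 0)))"
proof -
  have "((\<lambda>t. A * t) has_real_derivative A) (at (y 0))"
    by (auto intro!: derivative_eq_intros)
  hence "((\<lambda>t. of_real (A * t) :: complex) has_vector_derivative of_real A) (at (y 0))"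
    by (rule has_vector_derivative_of_real)
  hence d: "((\<lambda>t. \<i> * of_real (A * t)) has_vector_derivative \<i> * of_real A) (at (y 0))"
    by (rule has_vector_derivative_mult_right)
  have "((exp \<circ> (\<lambda>t. \<i> * of_real (A * t))) has_vector_derivative (\<i> * of_real A) * exp
      (\<i> * of_real (A * y 0))) (at (y 0))"
    by (rule field_vector_diff_chain_at[OF d]) (rule DERIV_exp)
  thus ?thesis unfolding has_pd_def by (simp add: o_def)
qed


section \<open>The map \<open>\<phi>\<^sub>\<delta>\<close>\<close>

lemma balanced_angle_identity: fixes n1 n2 :: nat and c s :: real
  assumes c2: "c = (real n1 + 1) / (real n1 + real n2 + 2)" and s2: "s = (real n2
      + 1) / (real n1 + real n2 + 2)"
  shows "real (n1 + n2 + 1) * c - s - real n1 = 0"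
proof -
  define N where "N = real n1 + real n2 + 2"
  have N: "N \<noteq> 0" unfolding N_def by simp
  have cN: "c * N = real n1 + 1" unfolding c2 N_def[symmetric] using N by simp
  have sN: "s * N = real n2 + 1" unfolding s2 N_def[symmetric] using N by simp
  have "(real (n1 + n2 + 1) * c - s - real n1) * N = real (n1 + n2 + 1) * (c * N) - s * N - real n1 * N"
    by (simp add: algebra_simps)
  also have "\<dots> = 0" unfolding cN sN unfolding N_def by (simp add: algebra_simps)
  finally show ?thesis using N by simp
qed

locale legendrian_pair =
  fixes n1 n2 :: nat and U1 U2 :: "coord set" and \<psi>1 \<psi>2 :: "coord \<Rightarrow> cvec" and \<delta> :: real
  assumes imm1: "immersion n1 (n1+1) U1 \<psi>1" and leg1: "legendrian n1 (n1+1) U1 \<psi>1"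
    and imm2: "immersion n2 (n2+1) U2 \<psi>2" and leg2: "legendrian n2 (n2+1) U2 \<psi>2"
    and d0: "0 < \<delta>" and d1: "\<delta> < pi/2"
begin

sublocale N1: legendrian_chart n1 "n1+1" U1 \<psi>1
  by unfold_locales (rule imm1, rule leg1)

sublocale N2: legendrian_chart n2 "n2+1" U2 \<psi>2
  by unfold_locales (rule imm2, rule leg2)

definition "c\<delta> = cos \<delta>"
definition "s\<delta> = sin \<delta>"
definition "\<omega>1 = sin \<delta> powi (int n1 + 1) * cos \<delta> powi (int n2 - 1)"
definition "\<omega>2 = sin \<delta> powi (int n1 - 1) * cos \<delta> powi (int n2 + 1)"
definition "gtt = \<omega>1^2 * c\<delta>^2 + \<omega>2^2 * s\<delta>^2"
definition "rot1 t = exp (\<i> * of_real (\<omega>1 * t))"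
definition "rot2 t = exp (- \<i> * of_real (\<omega>2 * t))"
abbreviation "\<phi> \<equiv> phi_delta n1 n2 \<delta> \<psi>1 \<psi>2"
abbreviation "D \<equiv> prod_dom n1 n2 U1 U2"
abbreviation "kk \<equiv> n1 + n2 + 1"
abbreviation "mm \<equiv> n1 + n2 + 2"
abbreviation "p \<equiv> split1 n1"
abbreviation "q \<equiv> split2 n1 n2"

lemma c\<delta>_pos: "c\<delta> > 0" and s\<delta>_pos: "s\<delta> > 0"
  unfolding c\<delta>_def s\<delta>_def using d0 d1 by (auto intro!: cos_gt_zero sin_gt_zero)

lemma cos_sin_sq: "c\<delta>^2 + s\<delta>^2 = 1"
  unfolding c\<delta>_def s\<delta>_def by simp

lemma \<omega>1_pos: "\<omega>1 > 0" and \<omega>2_pos: "\<omega>2 > 0"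
  using c\<delta>_pos s\<delta>_pos unfolding \<omega>1_def \<omega>2_def c\<delta>_def s\<delta>_def by auto

lemma gtt_pos: "gtt > 0"
  unfolding gtt_def using \<omega>1_pos \<omega>2_pos c\<delta>_pos s\<delta>_pos by (auto intro: add_pos_pos)

lemma \<omega>_balance: "\<omega>1 * c\<delta>^2 = \<omega>2 * s\<delta>^2"
proof -
  have c0: "c\<delta> \<noteq> 0" and s0: "s\<delta> \<noteq> 0" using c\<delta>_pos s\<delta>_pos by auto
  have "\<omega>1 * c\<delta>^2 = s\<delta> powi (int n1 + 1) * (c\<delta> powi (int n2 - 1) * c\<delta> powi 2)"
    unfolding \<omega>1_def c\<delta>_def s\<delta>_def by (simp add: power_int_def)
  also have "c\<delta> powi (int n2 - 1) * c\<delta> powi 2 = c\<delta> powi (int n2 + 1)"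
    using power_int_add[of c\<delta> "int n2 - 1" 2] c0 by (simp add: add.commute)
  also have "s\<delta> powi (int n1 + 1) = s\<delta> powi (int n1 - 1) * s\<delta> powi 2"
    using power_int_add[of s\<delta> "int n1 - 1" 2] s0 by (simp add: add.commute)
  finally show ?thesis unfolding \<omega>2_def c\<delta>_def s\<delta>_def by (simp add: power_int_def mult_ac)
qed

lemma rot1_unit: "rot1 t * cnj (rot1 t) = 1" and rot2_unit: "rot2 t * cnj (rot2 t) = 1"
  unfolding rot1_def rot2_def
  by (simp_all add: complex_norm_square[symmetric] norm_exp_i_times)

lemma phi_eq: "\<phi> y j = (if j < n1 + 1 then of_real c\<delta> * rot1 (y 0) * \<psi>1 (p y) j
   else of_real s\<delta> * rot2 (y 0) * \<psi>2 (q y) (j - (n1 + 1)))"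
  unfolding phi_delta_def rot1_def rot2_def \<omega>1_def \<omega>2_def c\<delta>_def s\<delta>_def by simp

lemma dom_subset_rn: "D \<subseteq> rn kk"
  unfolding prod_dom_def by auto

lemma split1_mem: "y \<in> D \<Longrightarrow> p y \<in> U1" and split2_mem: "y \<in> D \<Longrightarrow> q y \<in> U2"
  unfolding prod_dom_def by auto

lemma dom_open: "openin (top_of_set (rn kk)) D"
proof -
  obtain O1 where O1: "open O1" "U1 = rn n1 \<inter> O1" using N1.chart_open by (auto simp: openin_open)
  obtain O2 where O2: "open O2" "U2 = rn n2 \<inter> O2" using N2.chart_open by (auto simp: openin_open)
  have "D = rn kk \<inter> (p -` O1 \<inter> q -` O2)"
    unfolding prod_dom_def using O1 O2 split1_rn split2_rn by auto
  moreover have "open (p -` O1 \<inter> q -` O2)"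
    using open_vimage[OF O1(1) continuous_on_split1] open_vimage[OF O2(1) continuous_on_split2] by auto
  ultimately show ?thesis by (auto simp: openin_open)
qed

lemma dom_upd_time: "y \<in> D \<Longrightarrow> y(0:=t) \<in> D"
  unfolding prod_dom_def using rn_fun_upd[of y kk 0 t] by (auto simp: split1_upd0 split2_upd0)

lemma coord_cases: "a < kk \<Longrightarrow> a = 0 \<or> (\<exists>a'. a = Suc a' \<and> a' < n1) \<or> (\<exists>b. a = Suc (n1 + b) \<and> b < n2)"
proof -
  assume a: "a < kk"
  show ?thesis
  proof (cases a)
    case (Suc a')
    show ?thesis
    proof (cases "a' < n1")
      case False
      hence "a = Suc (n1 + (a' - n1)) \<and> a' - n1 < n2" using a Suc by auto
      thus ?thesis by blast
    qed (use Suc in auto)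
  qed simp
qed

text \<open>Closed form of the iterated partial derivatives of the two blocks of \<open>\<phi>\<^sub>\<delta>\<close>: every
  \<open>t\<close>-derivative contributes a factor \<open>\<i> \<omega>1\<close> (resp. \<open>-\<i> \<omega>2\<close>), derivatives along \<open>N1\<close>
  (resp. \<open>N2\<close>) fall on \<open>\<psi>1\<close> (resp. \<open>\<psi>2\<close>), and a derivative along the other factor gives 0.\<close>

definition iter_pd1 :: "nat list \<Rightarrow> coord \<Rightarrow> nat \<Rightarrow> complex" where
  "iter_pd1 ls y j = (if list_all (\<lambda>i. i \<le> n1) ls then of_real c\<delta> *
      (\<i> * of_real \<omega>1)^(count_list ls 0) * rot1 (y 0)
      * ipd (map (\<lambda>i. i - 1) (filter (\<lambda>i. i \<noteq> 0) ls)) (\<lambda>z. \<psi>1 z j) (p y) else 0)"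

definition iter_pd2 :: "nat list \<Rightarrow> coord \<Rightarrow> nat \<Rightarrow> complex" where
  "iter_pd2 ls y j = (if list_all (\<lambda>i. i
      = 0 \<or> n1 < i) ls then of_real s\<delta> * (- \<i> * of_real \<omega>2)^(count_list ls 0) * rot2 (y 0)
      * ipd (map (\<lambda>i. i - Suc n1) (filter (\<lambda>i. i \<noteq> 0) ls)) (\<lambda>z. \<psi>2 z j) (q y) else 0)"

lemma has_pd_rot1: "has_pd 0 y (\<lambda>z. rot1 (z 0)) (\<i> * of_real \<omega>1 * rot1 (y 0))"
  unfolding rot1_def by (rule has_pd_exp_time)

lemma has_pd_rot2: "has_pd 0 y (\<lambda>z. rot2 (z 0)) (- \<i> * of_real \<omega>2 * rot2 (y 0))"
  using has_pd_exp_time[where A="- \<omega>2" and y=y] unfolding rot2_def by simp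

lemma has_pd_iter_pd1:
  assumes y: "y \<in> D" and i: "i < kk" and j: "j < n1 + 1"
  shows "has_pd i y (\<lambda>z. iter_pd1 ls z j) (iter_pd1 (i#ls) y j)"
proof (cases "list_all (\<lambda>i. i \<le> n1) ls")
  case False
  thus ?thesis unfolding iter_pd1_def by simp
next
  case True
  define ls' where "ls' = map (\<lambda>i. i - 1) (filter (\<lambda>i. i \<noteq> 0) ls)"
  have ls': "set ls' \<subseteq> {..<n1}" using True unfolding ls'_def by (auto simp: list_all_iff)
  define K where "K = of_real c\<delta> * (\<i> * of_real \<omega>1)^(count_list ls 0)"
  have form: "\<And>z. iter_pd1 ls z j = K * rot1 (z 0) * ipd ls' (\<lambda>u. \<psi>1 u j) (p z)"
    unfolding iter_pd1_def K_def ls'_def using True by simp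
  consider (time) "i = 0" | (fst) a where "i = Suc a" "a < n1" | (snd) "n1 < i"
    by (metis Suc_pred' less_Suc_eq_le not_less not_gr_zero)
  thus ?thesis
  proof cases
    case time
    have "has_pd 0 y (\<lambda>z. K * rot1 (z 0) * ipd ls' (\<lambda>u. \<psi>1 u j) (p z))
        (K * (\<i> * of_real \<omega>1 * rot1 (y 0)) * ipd ls' (\<lambda>u. \<psi>1 u j) (p y))"
      by (rule has_pd_mult_time_factor[OF has_pd_rot1]) (simp add: split1_upd0)
    thus ?thesis unfolding form time using True by (simp add: iter_pd1_def K_def ls'_def mult_ac)
  next
    case fst
    have "has_pd a (p y) (ipd ls' (\<lambda>u. \<psi>1 u j)) (ipd (a#ls') (\<lambda>u. \<psi>1 u j) (p y))"
      by (rule N1.has_pd_ipd[OF split1_mem[OF y] fst(2) j ls'])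
    hence "has_pd i y (\<lambda>z. K * rot1 (z 0) * ipd ls' (\<lambda>u. \<psi>1 u j) (p z))
        (K * rot1 (y 0) * ipd (a#ls') (\<lambda>u. \<psi>1 u j) (p y))"
      unfolding fst(1) by (intro has_pd_mult_time_factor_other has_pd_split1[OF fst(2)]) simp
    thus ?thesis unfolding form using True fst by (simp add: iter_pd1_def K_def ls'_def)
  next
    case snd
    have "has_pd i y (\<lambda>z. ipd ls' (\<lambda>u. \<psi>1 u j) (p z)) 0"
      by (rule has_pd_const_on_line) (simp add: snd split1_upd2)
    hence "has_pd i y (\<lambda>z. K * rot1 (z 0) * ipd ls' (\<lambda>u. \<psi>1 u j) (p z)) (K * rot1 (y 0) * 0)"
      using snd by (intro has_pd_mult_time_factor_other) simp_all
    thus ?thesis unfolding form using snd by (simp add: iter_pd1_def)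
  qed
qed

lemma snd_indices_shift:
  assumes "set ls \<subseteq> {..<kk}" and "list_all (\<lambda>i. i = 0 \<or> n1 < i) ls"
  shows "set (map (\<lambda>i. i - Suc n1) (filter (\<lambda>i. i \<noteq> 0) ls)) \<subseteq> {..<n2}"
proof -
  have "x - Suc n1 < n2" if "x \<in> set ls" "x \<noteq> 0" for x
  proof -
    have "n1 < x" "x < Suc (n1 + n2)" using assms that by (auto simp: list_all_iff)
    thus ?thesis by linarith
  qed
  thus ?thesis by auto
qed

lemma has_pd_iter_pd2:
  assumes y: "y \<in> D" and i: "i < kk" and ls: "set ls \<subseteq> {..<kk}" and j: "j < n2 + 1"
  shows "has_pd i y (\<lambda>z. iter_pd2 ls z j) (iter_pd2 (i#ls) y j)"
proof (cases "list_all (\<lambda>i. i = 0 \<or> n1 < i) ls")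
  case False
  thus ?thesis unfolding iter_pd2_def by simp
next
  case True
  define ls' where "ls' = map (\<lambda>i. i - Suc n1) (filter (\<lambda>i. i \<noteq> 0) ls)"
  have ls': "set ls' \<subseteq> {..<n2}" unfolding ls'_def by (rule snd_indices_shift[OF ls True])
  define K where "K = of_real s\<delta> * (- \<i> * of_real \<omega>2)^(count_list ls 0)"
  have form: "\<And>z. iter_pd2 ls z j = K * rot2 (z 0) * ipd ls' (\<lambda>u. \<psi>2 u j) (q z)"
    unfolding iter_pd2_def K_def ls'_def using True by simp
  consider (time) "i = 0" | (fst) "0 < i" "i \<le> n1" | (snd) b where "i = Suc (n1 + b)" "b < n2"
    using coord_cases[OF i] by fastforce
  thus ?thesis
  proof cases
    case time
    have "has_pd 0 y (\<lambda>z. K * rot2 (z 0) * ipd ls' (\<lambda>u. \<psi>2 u j) (q z))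
        (K * (- \<i> * of_real \<omega>2 * rot2 (y 0)) * ipd ls' (\<lambda>u. \<psi>2 u j) (q y))"
      by (rule has_pd_mult_time_factor[OF has_pd_rot2]) (simp add: split2_upd0)
    thus ?thesis unfolding form time using True by (simp add: iter_pd2_def K_def ls'_def mult_ac)
  next
    case fst
    have "has_pd i y (\<lambda>z. ipd ls' (\<lambda>u. \<psi>2 u j) (q z)) 0"
      by (rule has_pd_const_on_line) (simp add: fst split2_upd3)
    hence "has_pd i y (\<lambda>z. K * rot2 (z 0) * ipd ls' (\<lambda>u. \<psi>2 u j) (q z)) (K * rot2 (y 0) * 0)"
      using fst by (intro has_pd_mult_time_factor_other) simp_all
    thus ?thesis unfolding form using fst by (simp add: iter_pd2_def)
  next
    case snd
    have "has_pd b (q y) (ipd ls' (\<lambda>u. \<psi>2 u j)) (ipd (b#ls') (\<lambda>u. \<psi>2 u j) (q y))"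
      by (rule N2.has_pd_ipd[OF split2_mem[OF y] snd(2) j ls'])
    hence "has_pd i y (\<lambda>z. K * rot2 (z 0) * ipd ls' (\<lambda>u. \<psi>2 u j) (q z))
        (K * rot2 (y 0) * ipd (b#ls') (\<lambda>u. \<psi>2 u j) (q y))"
      unfolding snd(1) by (intro has_pd_mult_time_factor_other has_pd_split2[OF snd(2)]) simp
    thus ?thesis unfolding form using True snd by (simp add: iter_pd2_def K_def ls'_def)
  qed
qed

definition iter_pd_phi :: "nat list \<Rightarrow> coord \<Rightarrow> nat \<Rightarrow> complex" where
  "iter_pd_phi ls y j = (if j < n1 + 1 then iter_pd1 ls y j else iter_pd2 ls y (j - (n1 + 1)))"

lemma has_pd_iter_pd_phi:
  assumes "y \<in> D" "i < kk" "set ls \<subseteq> {..<kk}" "j < mm"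
  shows "has_pd i y (\<lambda>z. iter_pd_phi ls z j) (iter_pd_phi (i#ls) y j)"
  using has_pd_iter_pd1[OF assms(1,2)] has_pd_iter_pd2[OF assms(1-3), of "j - (n1+1)"] assms(4)
  unfolding iter_pd_phi_def by (cases "j < n1 + 1") auto

lemma ipd_phi_eq:
  assumes "j < mm"
  shows "y \<in> D \<Longrightarrow> set ls \<subseteq> {..<kk} \<Longrightarrow> ipd ls (\<lambda>z. \<phi> z j) y = iter_pd_phi ls y j"
proof (induction ls arbitrary: y)
  case Nil
  show ?case unfolding iter_pd_phi_def iter_pd1_def iter_pd2_def by (simp add: phi_eq)
next
  case (Cons i ls)
  have i: "i < kk" and ls: "set ls \<subseteq> {..<kk}" using Cons.prems by auto
  have "ipd (i#ls) (\<lambda>z. \<phi> z j) y = pd i (ipd ls (\<lambda>z. \<phi> z j)) y" by simp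
  also have "\<dots> = pd i (\<lambda>z. iter_pd_phi ls z j) y"
    by (rule pd_cong_open[OF dom_open i Cons.prems(1)]) (use Cons.IH ls in auto)
  also have "\<dots> = iter_pd_phi (i#ls) y j"
    by (rule has_pd_imp_pd_eq[OF has_pd_iter_pd_phi[OF Cons.prems(1) i ls assms]])
  finally show ?case .
qed

definition join_vec :: "real \<Rightarrow> cvec \<Rightarrow> cvec \<Rightarrow> cvec" where
  "join_vec t u w = (\<lambda>j. if j < n1
      + 1 then of_real c\<delta> * rot1 t * u j else of_real s\<delta> * rot2 t * w (j - (n1 + 1)))"

text \<open>Vectors of \<open>\<complex>\<^sup>m\<close> are functions on all of \<open>nat\<close>; \<open>agree\<close> compares only the
  components that \<open>cinner\<close>, \<open>legendrian\<close> etc. look at.\<close>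

definition agree :: "cvec \<Rightarrow> cvec \<Rightarrow> bool" where
  "agree v w \<longleftrightarrow> (\<forall>j<mm. v j = w j)"

lemma cinner_agree: "agree v v' \<Longrightarrow> agree w w' \<Longrightarrow> cinner mm v w = cinner mm v' w'"
  unfolding agree_def by (rule cinner_cong) auto

lemma cinner_join_vec: "cinner mm (join_vec t u w) (join_vec t u' w') = c\<delta>^2 * cinner (n1+1) u u'
    + s\<delta>^2 * cinner (n2+1) w w'"
proof -
  have 1: "cinner (n1+1) (join_vec t u w) (join_vec t u' w')
      = cinner (n1+1) (\<lambda>j. (of_real c\<delta> * rot1 t) * u j) (\<lambda>j. (of_real c\<delta> * rot1 t) * u' j)"
    by (rule cinner_cong) (auto simp: join_vec_def)
  have 2: "cinner (n2+1) (\<lambda>j. join_vec t u w (n1+1+j)) (\<lambda>j. join_vec t u' w' (n1+1+j)) =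
       cinner (n2+1) (\<lambda>j. (of_real s\<delta> * rot2 t) * w j) (\<lambda>j. (of_real s\<delta> * rot2 t) * w' j)"
    by (rule cinner_cong) (auto simp: join_vec_def)
  have e1: "(of_real c\<delta> * rot1 t) * cnj (of_real c\<delta> * rot1 t) = of_real (c\<delta>^2)"
    using rot1_unit[of t] by (simp add: power2_eq_square mult_ac)
  have e2: "(of_real s\<delta> * rot2 t) * cnj (of_real s\<delta> * rot2 t) = of_real (s\<delta>^2)"
    using rot2_unit[of t] by (simp add: power2_eq_square mult_ac)
  show ?thesis
    unfolding cinner_split 1 2 cinner_scale_both[OF e1] cinner_scale_both[OF e2] ..
qed

lemma Jc_join_vec: "Jc (join_vec t u w) = join_vec t (Jc u) (Jc w)"
  unfolding Jc_def join_vec_def by (auto simp: mult_ac)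

lemma scale_join_vec: "of_real r * join_vec t u w j
    = join_vec t (\<lambda>j. of_real r * u j) (\<lambda>j. of_real r * w j) j"
  unfolding join_vec_def by (auto simp: algebra_simps)

lemma phi_join_vec: "\<phi> y = join_vec (y 0) (\<psi>1 (p y)) (\<psi>2 (q y))"
  unfolding join_vec_def by (rule ext) (simp add: phi_eq)

lemma vpd_phi_time: "y \<in> D \<Longrightarrow> agree (vpd 0 \<phi> y) (join_vec (y 0) (\<lambda>j. \<i> * of_real \<omega>1 * \<psi>1 (p y) j)
    (\<lambda>j. - \<i> * of_real \<omega>2 * \<psi>2 (q y) j))"
  unfolding agree_def vpd_eq_ipd
  by (auto simp: ipd_phi_eq iter_pd_phi_def iter_pd1_def iter_pd2_def join_vec_def
      mult_ac simp del: ipd.simps(2))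

lemma vpd_phi_fst: "y \<in> D \<Longrightarrow> a < n1 \<Longrightarrow> agree (vpd (Suc a) \<phi> y) (join_vec (y 0) (vpd a \<psi>1 (p y)) (\<lambda>j. 0))"
  unfolding agree_def vpd_eq_ipd
  by (auto simp: ipd_phi_eq iter_pd_phi_def iter_pd1_def iter_pd2_def join_vec_def
      mult_ac simp del: ipd.simps(2))

lemma vpd_phi_snd: "y \<in> D \<Longrightarrow> b < n2 \<Longrightarrow> agree (vpd (Suc (n1+b)) \<phi> y) (join_vec (y 0) (\<lambda>j. 0) (vpd b \<psi>2 (q y)))"
  unfolding agree_def vpd_eq_ipd
  by (auto simp: ipd_phi_eq iter_pd_phi_def iter_pd1_def iter_pd2_def join_vec_def
      mult_ac simp del: ipd.simps(2))

lemma vpd2_phi_time: "y \<in> D \<Longrightarrow> agree (vpd 0 (vpd 0 \<phi>) y) (join_vec (y 0) (\<lambda>j. - of_real (\<omega>1^2) * \<psi>1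
    (p y) j) (\<lambda>j. - of_real (\<omega>2^2) * \<psi>2 (q y) j))"
  unfolding agree_def vpd2_eq_ipd
  by (auto simp: ipd_phi_eq iter_pd_phi_def iter_pd1_def iter_pd2_def join_vec_def mult_ac
      power2_eq_square simp del: ipd.simps(2))

lemma vpd2_phi_fst: "y \<in> D \<Longrightarrow> a < n1 \<Longrightarrow> b < n1 \<Longrightarrow>
   agree (vpd (Suc a) (vpd (Suc b) \<phi>) y) (join_vec (y 0) (vpd a (vpd b \<psi>1) (p y)) (\<lambda>j. 0))"
  unfolding agree_def vpd2_eq_ipd
  by (auto simp: ipd_phi_eq iter_pd_phi_def iter_pd1_def iter_pd2_def join_vec_def
      mult_ac simp del: ipd.simps(2))

lemma vpd2_phi_snd: "y \<in> D \<Longrightarrow> a < n2 \<Longrightarrow> b < n2 \<Longrightarrow>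
   agree (vpd (Suc (n1+a)) (vpd (Suc (n1+b)) \<phi>) y) (join_vec (y 0) (\<lambda>j. 0) (vpd a (vpd b \<psi>2) (q y)))"
  unfolding agree_def vpd2_eq_ipd
  by (auto simp: ipd_phi_eq iter_pd_phi_def iter_pd1_def iter_pd2_def join_vec_def
      mult_ac simp del: ipd.simps(2))

lemma agree_join_vec_fst: "agree v (join_vec t u w) \<Longrightarrow> j < n1 + 1 \<Longrightarrow> v j = of_real c\<delta> * rot1 t * u j"
  unfolding agree_def join_vec_def by auto

lemma agree_join_vec_snd: "agree v (join_vec t u w) \<Longrightarrow> j < n2 + 1 \<Longrightarrow> v (n1 + 1 + j) = of_real s\<delta> * rot2 t * w j"
  unfolding agree_def join_vec_def by auto

lemma continuous_on_time: "continuous_on S (\<lambda>y::coord. y 0)"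
  by (rule continuous_on_subset[OF continuous_on_product_coordinates]) auto

lemma continuous_on_iter_pd1:
  assumes "j < n1 + 1"
  shows "continuous_on D (\<lambda>y. iter_pd1 ls y j)"
proof (cases "list_all (\<lambda>i. i \<le> n1) ls")
  case True
  have "continuous_on D (\<lambda>y. ipd (map (\<lambda>i. i - 1) (filter (\<lambda>i. i \<noteq> 0) ls)) (\<lambda>z. \<psi>1 z j) (p y))"
    by (intro continuous_on_compose2[OF N1.continuous_on_ipd continuous_on_subset[OF continuous_on_split1]])
       (use assms True split1_mem in \<open>auto simp: list_all_iff\<close>)
  thus ?thesis unfolding iter_pd1_def rot1_def using True by
      (auto intro!: continuous_intros continuous_on_time)
qed (simp add: iter_pd1_def)

lemma continuous_on_iter_pd2:
  assumes "j < n2 + 1" and ls: "set ls \<subseteq> {..<kk}"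
  shows "continuous_on D (\<lambda>y. iter_pd2 ls y j)"
proof (cases "list_all (\<lambda>i. i = 0 \<or> n1 < i) ls")
  case True
  have "continuous_on D (\<lambda>y. ipd (map (\<lambda>i. i - Suc n1) (filter (\<lambda>i. i \<noteq> 0) ls)) (\<lambda>z. \<psi>2 z j) (q y))"
    by (intro continuous_on_compose2[OF N2.continuous_on_ipd continuous_on_subset[OF continuous_on_split2]])
       (use assms snd_indices_shift[OF ls True] split2_mem in auto)
  thus ?thesis unfolding iter_pd2_def rot2_def using True by
      (auto intro!: continuous_intros continuous_on_time)
qed (simp add: iter_pd2_def)

lemma continuous_on_iter_pd_phi: "j < mm \<Longrightarrow> set ls \<subseteq> {..<kk} \<Longrightarrow> continuous_on D (\<lambda>y. iter_pd_phi ls y j)"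
  unfolding iter_pd_phi_def using continuous_on_iter_pd1[of j ls] continuous_on_iter_pd2[of "j - (n1 + 1)" ls]
  by (cases "j < n1 + 1") auto

lemma smooth_phi: assumes j: "j < mm" shows "smooth_on kk D (\<lambda>x. \<phi> x j)"
  unfolding smooth_on_def
proof (intro allI impI conjI ballI)
  fix ls assume ls: "set ls \<subseteq> {..<kk}"
  have eq: "\<And>y. y \<in> D \<Longrightarrow> iter_pd_phi ls y j = ipd ls (\<lambda>x. \<phi> x j) y"
    using ipd_phi_eq[OF j _ ls] by simp
  show "continuous_on D (ipd ls (\<lambda>x. \<phi> x j))"
    using continuous_on_iter_pd_phi[OF j ls] eq
      continuous_on_cong[OF refl, of D "\<lambda>y. iter_pd_phi ls y j" "ipd ls (\<lambda>x. \<phi> x j)"]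
    by blast
  fix i x assume i: "i < kk" and x: "x \<in> D"
  show "(\<lambda>t. ipd ls (\<lambda>x. \<phi> x j) (x(i := t))) differentiable at (x i)"
    by (rule has_pd_imp_differentiable[OF has_pd_cong_open[OF dom_open i x eq
      has_pd_iter_pd_phi[OF x i ls j]]])
qed


section \<open>\<open>\<phi>\<^sub>\<delta>\<close> is a Legendrian immersion\<close>

lemma vpd_phi_time_at_fst: "y \<in> D \<Longrightarrow> j < n1 + 1
    \<Longrightarrow> vpd 0 \<phi> y j = of_real c\<delta> * rot1 (y 0) * (\<i> * of_real \<omega>1 * \<psi>1 (p y) j)"
  using agree_join_vec_fst[OF vpd_phi_time] by blast
lemma vpd_phi_time_at_snd: "y \<in> D \<Longrightarrow> j < n2 + 1
    \<Longrightarrow> vpd 0 \<phi> y (n1 + 1 + j) = of_real s\<delta> * rot2 (y 0) * (- \<i> * of_real \<omega>2 * \<psi>2 (q y) j)"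
  using agree_join_vec_snd[OF vpd_phi_time] by blast
lemma vpd_phi_fst_at_fst: "y \<in> D \<Longrightarrow> a < n1 \<Longrightarrow> j < n1 + 1
    \<Longrightarrow> vpd (Suc a) \<phi> y j = of_real c\<delta> * rot1 (y 0) * vpd a \<psi>1 (p y) j"
  using agree_join_vec_fst[OF vpd_phi_fst] by blast
lemma vpd_phi_fst_at_snd: "y \<in> D \<Longrightarrow> a < n1 \<Longrightarrow> j < n2 + 1 \<Longrightarrow> vpd (Suc a) \<phi> y (n1 + 1 + j) = 0"
  using agree_join_vec_snd[OF vpd_phi_fst] by fastforce
lemma vpd_phi_snd_at_fst: "y \<in> D \<Longrightarrow> b < n2 \<Longrightarrow> j < n1 + 1 \<Longrightarrow> vpd (Suc (n1 + b)) \<phi> y j = 0"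
  using agree_join_vec_fst[OF vpd_phi_snd] by fastforce
lemma vpd_phi_snd_at_snd: "y \<in> D \<Longrightarrow> b < n2 \<Longrightarrow> j < n2 + 1
    \<Longrightarrow> vpd (Suc (n1 + b)) \<phi> y (n1 + 1 + j) = of_real s\<delta> * rot2 (y 0) * vpd b \<psi>2 (q y) j"
  using agree_join_vec_snd[OF vpd_phi_snd] by blast

lemma sum_vpd_phi_at_fst:
  assumes y: "y \<in> D" and j: "j < n1 + 1"
  shows "(\<Sum>a<kk. of_real (c a) * vpd a \<phi> y j) = of_real c\<delta> * rot1 (y 0) *
    (of_real (c 0) * (\<i> * of_real \<omega>1 * \<psi>1 (p y) j) + (\<Sum>a<n1. of_real (c (Suc a)) * vpd a \<psi>1 (p y) j))"
proof -
  have "(\<Sum>b<n2. of_real (c (Suc (n1+b))) * vpd (Suc (n1+b)) \<phi> y j) = 0"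
    by (rule sum.neutral, intro ballI) (simp add: vpd_phi_snd_at_fst[OF y _ j])
  moreover have "(\<Sum>a<n1. of_real (c (Suc a)) * vpd (Suc a) \<phi> y j) =
      (\<Sum>a<n1. of_real (c (Suc a)) * (of_real c\<delta> * rot1 (y 0) * vpd a \<psi>1 (p y) j))"
    by (rule sum.cong) (simp_all add: vpd_phi_fst_at_fst[OF y _ j])
  ultimately show ?thesis
    unfolding sum_split_coords vpd_phi_time_at_fst[OF y j] by (simp add: sum_distrib_left algebra_simps)
qed

lemma sum_vpd_phi_at_snd:
  assumes y: "y \<in> D" and j: "j < n2 + 1"
  shows "(\<Sum>a<kk. of_real (c a) * vpd a \<phi> y (n1 + 1 + j)) = of_real s\<delta> * rot2 (y 0) *
    (of_real (c 0) * (- \<i> * of_real \<omega>2 * \<psi>2 (q y) j) + (\<Sum>b<n2. of_real (c (Suc (n1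
      + b))) * vpd b \<psi>2 (q y) j))"
proof -
  have "(\<Sum>a<n1. of_real (c (Suc a)) * vpd (Suc a) \<phi> y (n1 + 1 + j)) = 0"
    by (rule sum.neutral, intro ballI) (simp add: vpd_phi_fst_at_snd[OF y _ j, simplified])
  moreover have "(\<Sum>b<n2. of_real (c (Suc (n1+b))) * vpd (Suc (n1+b)) \<phi> y (n1 + 1 + j)) =
      (\<Sum>b<n2. of_real (c (Suc (n1+b))) * (of_real s\<delta> * rot2 (y 0) * vpd b \<psi>2 (q y) j))"
    by (rule sum.cong) (simp_all add: vpd_phi_snd_at_snd[OF y _ j, simplified])
  ultimately show ?thesis
    unfolding sum_split_coords vpd_phi_time_at_snd[OF y j] by (simp add: sum_distrib_left algebra_simps)
qed

lemma frame_indep_phi: assumes y: "y \<in> D" shows "frame_indep kk mm \<phi> y"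
  unfolding frame_indep_def
proof (rule allI, rule impI)
  fix c :: "nat \<Rightarrow> real"
  assume h: "\<forall>j<mm. (\<Sum>a<kk. of_real (c a) * vpd a \<phi> y j) = 0"
  have py: "p y \<in> U1" and qy: "q y \<in> U2" using split1_mem[OF y] split2_mem[OF y] .
  define u where "u j = of_real (c 0) * (\<i> * of_real \<omega>1 * \<psi>1 (p y) j)
      + (\<Sum>a<n1. of_real (c (Suc a)) * vpd a \<psi>1 (p y) j)" for j
  define w where "w j = of_real (c 0) * (- \<i> * of_real \<omega>2 * \<psi>2 (q y) j)
      + (\<Sum>b<n2. of_real (c (Suc (n1 + b))) * vpd b \<psi>2 (q y) j)" for j
  have u0: "\<forall>j<n1+1. u j = 0"
  proof (intro allI impI)
    fix j assume j: "j < n1 + 1"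
    have "(\<Sum>a<kk. of_real (c a) * vpd a \<phi> y j) = 0" using h j by simp
    hence "of_real c\<delta> * rot1 (y 0) * u j = 0" unfolding sum_vpd_phi_at_fst[OF y j] u_def .
    thus "u j = 0" using c\<delta>_pos unfolding rot1_def by simp
  qed
  have w0: "\<forall>j<n2+1. w j = 0"
  proof (intro allI impI)
    fix j assume j: "j < n2 + 1"
    have "(\<Sum>a<kk. of_real (c a) * vpd a \<phi> y (n1 + 1 + j)) = 0" using h j by simp
    hence "of_real s\<delta> * rot2 (y 0) * w j = 0" unfolding sum_vpd_phi_at_snd[OF y j] w_def .
    thus "w j = 0" using s\<delta>_pos unfolding rot2_def by simp
  qed
  have "c 0 * \<omega>1 = cinner (n1+1) u (Jc (\<psi>1 (p y)))"
  proof -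
    have "\<i> * of_real \<omega>1 * cnj \<i> = of_real \<omega>1" by (simp add: algebra_simps)
    hence "cinner (n1+1) (\<lambda>j. \<i> * of_real \<omega>1 * \<psi>1 (p y) j) (Jc (\<psi>1 (p y))) = \<omega>1"
      unfolding Jc_def using cinner_scale_both N1.cinner_self_eq_1[OF py] by simp
    moreover have "cinner (n1+1) (\<lambda>j. \<Sum>a<n1. of_real (c (Suc a)) * vpd a \<psi>1 (p y) j) (Jc (\<psi>1 (p y))) = 0"
      by (simp add: cinner_sum_left cinner_scale_left N1.cinner_vpd_Jc_self[OF py, simplified])
    ultimately show ?thesis unfolding u_def cinner_add_left cinner_scale_left by simp
  qed
  also have "\<dots> = 0" using u0 cinner_cong[of "n1+1" u "\<lambda>j. 0"] cinner_zero_left by simp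
  finally have c0: "c 0 = 0" using \<omega>1_pos by simp
  have c1: "\<forall>a<n1. c (Suc a) = 0"
    using u0 c0 N1.frame_indep_at[OF py, unfolded frame_indep_def, THEN spec[of _ "\<lambda>a. c (Suc a)"]]
    unfolding u_def by simp
  have c2: "\<forall>b<n2. c (Suc (n1 + b)) = 0"
    using w0 c0 N2.frame_indep_at[OF qy, unfolded frame_indep_def, THEN spec[of _ "\<lambda>b. c (Suc (n1 + b))"]]
    unfolding w_def by simp
  show "\<forall>a<kk. c a = 0"
  proof (intro allI impI)
    fix a assume "a < kk"
    thus "c a = 0" using coord_cases c0 c1 c2 by blast
  qed
qed

lemma immersion_phi: "immersion kk mm D \<phi>"
  unfolding immersion_iff_frame_indep using dom_subset_rn dom_open smooth_phi frame_indep_phi by blast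

lemma legendrian_phi: "legendrian kk mm D \<phi>"
  unfolding legendrian_def
proof (intro ballI conjI allI impI)
  fix y assume y: "y \<in> D"
  have py: "p y \<in> U1" using split1_mem[OF y] .
  have qy: "q y \<in> U2" using split2_mem[OF y] .
  show "cinner mm (\<phi> y) (\<phi> y) = 1"
    unfolding phi_join_vec cinner_join_vec
      using N1.cinner_self_eq_1[OF py] N2.cinner_self_eq_1[OF qy] cos_sin_sq by simp
  fix a assume a: "a < kk"
  have J: "agree (Jc (\<phi> y)) (join_vec (y 0) (Jc (\<psi>1 (p y))) (Jc (\<psi>2 (q y))))"
    unfolding phi_join_vec Jc_join_vec agree_def by simp
  consider "a = 0" | a' where "a = Suc a'" "a' < n1" | b where "a = Suc (n1 + b)" "b < n2"
    using coord_cases[OF a] by blast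
  thus "cinner mm (vpd a \<phi> y) (Jc (\<phi> y)) = 0"
  proof cases
    case 1
    have e1: "\<i> * of_real \<omega>1 * cnj \<i> = of_real \<omega>1" by (simp add: algebra_simps)
    have e2: "- \<i> * of_real \<omega>2 * cnj \<i> = of_real (- \<omega>2)" by (simp add: algebra_simps)
    have "cinner mm (vpd a \<phi> y) (Jc (\<phi> y)) = c\<delta>\<^sup>2 * cinner (n1
      + 1) (\<lambda>j. \<i> * complex_of_real \<omega>1 * \<psi>1 (p y) j) (Jc (\<psi>1 (p y))) +
      s\<delta>\<^sup>2 * cinner (n2 + 1) (\<lambda>j. - \<i> * complex_of_real \<omega>2 * \<psi>2 (q y) j) (Jc (\<psi>2 (q y)))"
      unfolding 1 cinner_agree[OF vpd_phi_time[OF y] J] cinner_join_vec ..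
    also have "\<dots> = c\<delta>\<^sup>2 * \<omega>1 - s\<delta>\<^sup>2 * \<omega>2"
      unfolding Jc_def cinner_scale_both[OF e1] cinner_scale_both[OF e2]
        using N1.cinner_self_eq_1[OF py] N2.cinner_self_eq_1[OF qy] by simp
    finally show ?thesis using \<omega>_balance by (simp add: mult.commute)
  next
    case (2 a')
    show ?thesis unfolding 2 cinner_agree[OF vpd_phi_fst[OF y 2(2)] J] cinner_join_vec
      using N1.cinner_vpd_Jc_self[OF py 2(2)] by (simp add: cinner_zero_left)
  next
    case (3 b)
    show ?thesis unfolding 3 cinner_agree[OF vpd_phi_snd[OF y 3(2)] J] cinner_join_vec
      using N2.cinner_vpd_Jc_self[OF qy 3(2)] by (simp add: cinner_zero_left)
  qed
qed

section \<open>The induced metric of \<open>\<phi>\<^sub>\<delta>\<close>\<close>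

definition block_diag :: "real \<Rightarrow> (nat \<Rightarrow> nat \<Rightarrow> real) \<Rightarrow> (nat \<Rightarrow> nat \<Rightarrow> real) \<Rightarrow> nat \<Rightarrow> nat \<Rightarrow> real" where
  "block_diag \<alpha> M1 M2 a b = (if a = 0 \<and> b = 0 then \<alpha>
     else if 0 < a \<and> a \<le> n1 \<and> 0 < b \<and> b \<le> n1 then M1 (a - 1) (b - 1)
     else if n1 < a \<and> a < kk \<and> n1 < b \<and> b < kk then M2 (a - Suc n1) (b - Suc n1) else 0)"

lemma block_diag_time[simp]: "block_diag \<alpha> M1 M2 0 0 = \<alpha>"
  and block_diag_time_Suc[simp]: "block_diag \<alpha> M1 M2 0 (Suc a) = 0"
  and block_diag_Suc_time[simp]: "block_diag \<alpha> M1 M2 (Suc a) 0 = 0"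
  unfolding block_diag_def by auto

lemma block_diag_fst_fst[simp]: "a < n1 \<Longrightarrow> b < n1 \<Longrightarrow> block_diag \<alpha> M1 M2 (Suc a) (Suc b) = M1 a b"
  and block_diag_fst_snd[simp]: "a < n1 \<Longrightarrow> block_diag \<alpha> M1 M2 (Suc a) (Suc (n1 + b)) = 0"
  and block_diag_snd_fst[simp]: "a < n1 \<Longrightarrow> block_diag \<alpha> M1 M2 (Suc (n1 + b)) (Suc a) = 0"
  and block_diag_snd_snd[simp]: "a < n2 \<Longrightarrow> b < n2 \<Longrightarrow> block_diag \<alpha> M1 M2 (Suc (n1 + a)) (Suc (n1 + b)) = M2 a b"
  unfolding block_diag_def by auto

lemma block_diag_out: "kk \<le> a \<or> kk \<le> b \<Longrightarrow> block_diag \<alpha> M1 M2 a b = 0"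
  unfolding block_diag_def by auto

lemma sum_block_diag_time: "(\<Sum>c<kk. block_diag \<alpha> M1 M2 0 c * F c) = \<alpha> * F 0"
  unfolding sum_split_coords by simp

lemma sum_block_diag_fst: "a < n1 \<Longrightarrow> (\<Sum>c<kk. block_diag \<alpha> M1 M2 (Suc a) c * F c) = (\<Sum>c<n1. M1 a c * F (Suc c))"
  unfolding sum_split_coords by (simp add: sum.neutral)

lemma sum_block_diag_snd: "a < n2 \<Longrightarrow> (\<Sum>c<kk. block_diag \<alpha> M1 M2 (Suc (n1 + a)) c * F c)
    = (\<Sum>c<n2. M2 a c * F (Suc (n1 + c)))"
  unfolding sum_split_coords by (simp add: sum.neutral)

lemma sum_block_diag_time_complex: "(\<Sum>c<kk. of_real (block_diag \<alpha> M1 M2 0 c) * F c)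
    = of_real \<alpha> * (F 0 :: complex)"
  unfolding sum_split_coords by simp

lemma sum_block_diag_fst_complex: "a < n1
    \<Longrightarrow> (\<Sum>c<kk. of_real (block_diag \<alpha> M1 M2 (Suc a) c) * F c)
    = (\<Sum>c<n1. of_real (M1 a c) * (F (Suc c) :: complex))"
  unfolding sum_split_coords by (simp add: sum.neutral)

lemma sum_block_diag_snd_complex: "a < n2
    \<Longrightarrow> (\<Sum>c<kk. of_real (block_diag \<alpha> M1 M2 (Suc (n1 + a)) c) * F c)
    = (\<Sum>c<n2. of_real (M2 a c) * (F (Suc (n1 + c)) :: complex))"
  unfolding sum_split_coords by (simp add: sum.neutral)

lemma double_sum_block_diag: "(\<Sum>a<kk. \<Sum>b<kk. of_real (block_diag \<alpha> M1 M2 a b) * F a b) =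
   of_real \<alpha> * F 0 0 + (\<Sum>a<n1. \<Sum>b<n1. of_real (M1 a b) * F (Suc a) (Suc b))
     + (\<Sum>a<n2. \<Sum>b<n2. of_real (M2 a b) * (F (Suc (n1 + a)) (Suc (n1 + b)) :: complex))"
proof -
  have 1: "(\<Sum>a<n1. \<Sum>b<kk. of_real (block_diag \<alpha> M1 M2 (Suc a) b) * F (Suc a) b)
      = (\<Sum>a<n1. \<Sum>b<n1. of_real (M1 a b) * F (Suc a) (Suc b))"
    by (rule sum.cong[OF refl], rule sum_block_diag_fst_complex, simp)
  have 2: "(\<Sum>a<n2. \<Sum>b<kk. of_real (block_diag \<alpha> M1 M2 (Suc (n1+a)) b) * F (Suc (n1+a)) b)
      = (\<Sum>a<n2. \<Sum>b<n2. of_real (M2 a b) * F (Suc (n1 + a)) (Suc (n1 + b)))"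
    by (rule sum.cong[OF refl], rule sum_block_diag_snd_complex, simp)
  show ?thesis unfolding sum_split_coords[of "\<lambda>a. \<Sum>b<kk. of_real
      (block_diag \<alpha> M1 M2 a b) * F a b"] 1 2 sum_block_diag_time_complex by simp
qed

lemma block_diag_mult_right_inverse:
  assumes "\<alpha> * \<beta> = 1"
    and "\<And>a b. a < n1 \<Longrightarrow> b < n1 \<Longrightarrow> (\<Sum>c<n1. M1 a c * G1 c b) = (if a = b then 1 else 0)"
    and "\<And>a b. a < n2 \<Longrightarrow> b < n2 \<Longrightarrow> (\<Sum>c<n2. M2 a c * G2 c b) = (if a = b then 1 else 0)"
    and a: "a < kk" and b: "b < kk"
  shows "(\<Sum>c<kk. block_diag \<alpha> M1 M2 a c * block_diag \<beta> G1 G2 c b) = (if a = b then 1 else 0)"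
proof -
  consider "b = 0" | b' where "b = Suc b'" "b' < n1" | b' where "b = Suc (n1 + b')" "b' < n2"
    using coord_cases[OF b] by blast
  note b_cases = this
  consider "a = 0" | a' where "a = Suc a'" "a' < n1" | a' where "a = Suc (n1 + a')" "a' < n2"
    using coord_cases[OF a] by blast
  thus ?thesis
  proof cases
    case 1
    show ?thesis unfolding 1 sum_block_diag_time using assms(1) by (cases rule: b_cases) auto
  next
    case (2 a')
    show ?thesis unfolding 2 sum_block_diag_fst[OF 2(2)] using assms(2) 2 by (cases rule: b_cases) auto
  next
    case (3 a')
    show ?thesis unfolding 3 sum_block_diag_snd[OF 3(2)] using assms(3) 3 by (cases rule: b_cases) auto
  qed
qed

lemma gmet_phi_time_time: "y \<in> D \<Longrightarrow> gmet mm \<phi> y 0 0 = gtt"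
proof -
  assume y: "y \<in> D"
  have py: "p y \<in> U1" and qy: "q y \<in> U2" using split1_mem[OF y] split2_mem[OF y] .
  show ?thesis unfolding gmet_def cinner_agree[OF vpd_phi_time[OF y] vpd_phi_time[OF y]] cinner_join_vec
      cinner_scale_both[OF i_scale_mult_cnj] cinner_scale_both[OF minus_i_scale_mult_cnj]
    using N1.cinner_self_eq_1[OF py] N2.cinner_self_eq_1[OF qy] by (simp add: gtt_def mult_ac)
qed

lemma gmet_phi_time_fst: "y \<in> D \<Longrightarrow> a < n1 \<Longrightarrow> gmet mm \<phi> y 0 (Suc a) = 0"
  and gmet_phi_fst_time: "y \<in> D \<Longrightarrow> a < n1 \<Longrightarrow> gmet mm \<phi> y (Suc a) 0 = 0"
proof -
  assume y: "y \<in> D" and a: "a < n1"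
  have py: "p y \<in> U1" using split1_mem[OF y] .
  show "gmet mm \<phi> y 0 (Suc a) = 0"
      unfolding gmet_def cinner_agree[OF vpd_phi_time[OF y] vpd_phi_fst[OF y a]] cinner_join_vec
      cinner_i_scale_left cinner_minus_i_scale_left using N1.cinner_vpd_Jc_self[OF py a] by
        (simp add: cinner_zero_left cinner_zero_right)
  thus "gmet mm \<phi> y (Suc a) 0 = 0" unfolding gmet_def using cinner_sym by metis
qed

lemma gmet_phi_time_snd: "y \<in> D \<Longrightarrow> b < n2 \<Longrightarrow> gmet mm \<phi> y 0 (Suc (n1 + b)) = 0"
  and gmet_phi_snd_time: "y \<in> D \<Longrightarrow> b < n2 \<Longrightarrow> gmet mm \<phi> y (Suc (n1 + b)) 0 = 0"
proof -
  assume y: "y \<in> D" and b: "b < n2"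
  have qy: "q y \<in> U2" using split2_mem[OF y] .
  show "gmet mm \<phi> y 0 (Suc (n1 + b))
      = 0" unfolding gmet_def cinner_agree[OF vpd_phi_time[OF y] vpd_phi_snd[OF y b]] cinner_join_vec
      cinner_i_scale_left cinner_minus_i_scale_left using N2.cinner_vpd_Jc_self[OF qy b] by
        (simp add: cinner_zero_left cinner_zero_right)
  thus "gmet mm \<phi> y (Suc (n1 + b)) 0 = 0" unfolding gmet_def using cinner_sym by metis
qed

lemma gmet_phi_fst_fst: "y \<in> D \<Longrightarrow> a < n1 \<Longrightarrow> b < n1
    \<Longrightarrow> gmet mm \<phi> y (Suc a) (Suc b) = c\<delta>^2 * gmet (n1+1) \<psi>1 (p y) a b"
  unfolding gmet_def by (subst cinner_agree[OF vpd_phi_fst vpd_phi_fst], assumption+)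
      (simp add: cinner_join_vec[simplified] cinner_zero_left)

lemma gmet_phi_snd_snd: "y \<in> D \<Longrightarrow> a < n2 \<Longrightarrow> b < n2
    \<Longrightarrow> gmet mm \<phi> y (Suc (n1+a)) (Suc (n1+b)) = s\<delta>^2 * gmet (n2+1) \<psi>2 (q y) a b"
  unfolding gmet_def by (subst cinner_agree[OF vpd_phi_snd vpd_phi_snd], assumption+)
      (simp add: cinner_join_vec[simplified] cinner_zero_left)

lemma gmet_phi_fst_snd: "y \<in> D \<Longrightarrow> a < n1 \<Longrightarrow> b < n2 \<Longrightarrow> gmet mm \<phi> y (Suc a) (Suc (n1+b)) = 0"
  and gmet_phi_snd_fst: "y \<in> D \<Longrightarrow> a < n1 \<Longrightarrow> b < n2 \<Longrightarrow> gmet mm \<phi> y (Suc (n1+b)) (Suc a) = 0"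
  unfolding gmet_def
   apply (subst cinner_agree[OF vpd_phi_fst vpd_phi_snd], assumption+, simp add:
     cinner_join_vec[simplified] cinner_zero_left cinner_zero_right)
  apply (subst cinner_agree[OF vpd_phi_snd vpd_phi_fst], assumption+, simp add:
      cinner_join_vec[simplified] cinner_zero_left cinner_zero_right)
  done

abbreviation "G1 y \<equiv> ginv n1 (n1+1) \<psi>1 (p y)"
abbreviation "G2 y \<equiv> ginv n2 (n2+1) \<psi>2 (q y)"

definition "gmet_block y = block_diag gtt (\<lambda>a b. c\<delta>^2 * gmet (n1+1) \<psi>1 (p y) a b)
    (\<lambda>a b. s\<delta>^2 * gmet (n2+1) \<psi>2 (q y) a b)"
definition "ginv_block y = block_diag (1/gtt) (\<lambda>a b. G1 y a b / c\<delta>^2) (\<lambda>a b. G2 y a b / s\<delta>^2)"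

lemma gmet_phi_eq_block: "y \<in> D \<Longrightarrow> a < kk \<Longrightarrow> b < kk \<Longrightarrow> gmet mm \<phi> y a b = gmet_block y a b"
  unfolding gmet_block_def
  using coord_cases[of a] coord_cases[of b]
  by (auto simp: gmet_phi_time_time[simplified] gmet_phi_time_fst[simplified]
      gmet_phi_fst_time[simplified] gmet_phi_time_snd[simplified] gmet_phi_snd_time[simplified]
     gmet_phi_fst_fst[simplified] gmet_phi_snd_snd[simplified] gmet_phi_fst_snd[simplified]
       gmet_phi_snd_fst[simplified])

lemma ginv_block_out: "kk \<le> a \<or> kk \<le> b \<Longrightarrow> ginv_block y a b = 0"
  unfolding ginv_block_def by (rule block_diag_out)

lemma is_ginv_phi: assumes y: "y \<in> D" shows "is_ginv kk mm \<phi> y (ginv_block y)"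
  unfolding is_ginv_def
proof (intro conjI allI impI)
  fix a b assume "kk \<le> a \<or> kk \<le> b"
  thus "ginv_block y a b = 0" by (rule ginv_block_out)
next
  fix a b assume a: "a < kk" and b: "b < kk"
  have py: "p y \<in> U1" and qy: "q y \<in> U2" using split1_mem[OF y] split2_mem[OF y] .
  have c0: "c\<delta>^2 \<noteq> 0" "s\<delta>^2 \<noteq> 0" using c\<delta>_pos s\<delta>_pos by auto
  have "(\<Sum>c<kk. gmet mm \<phi> y a c * ginv_block y c b) = (\<Sum>c<kk. gmet_block y a c * ginv_block y c b)"
    by (rule sum.cong[OF refl]) (simp only: gmet_phi_eq_block[OF y a] lessThan_iff)
  also have "\<dots> = (if a = b then 1 else 0)"
    unfolding gmet_block_def ginv_block_def
  proof (rule block_diag_mult_right_inverse[OF _ _ _ a b])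
    show "gtt * (1 / gtt) = 1" using gtt_pos by simp
    show "(\<Sum>c<n1. c\<delta>^2 * gmet (n1+1) \<psi>1 (p y) a c * (G1 y c b / c\<delta>^2)) = (if a = b then 1 else 0)"
      if "a < n1" "b < n1" for a b
      using N1.ginv_right[OF py that] c0 by simp
    show "(\<Sum>c<n2. s\<delta>^2 * gmet (n2+1) \<psi>2 (q y) a c * (G2 y c b / s\<delta>^2)) = (if a = b then 1 else 0)"
      if "a < n2" "b < n2" for a b
      using N2.ginv_right[OF qy that] c0 by simp
  qed
  finally show "(\<Sum>c<kk. gmet mm \<phi> y a c * ginv_block y c b) = (if a = b then 1 else 0)" .
qed

lemma ginv_phi_eq_block: "y \<in> D \<Longrightarrow> ginv kk mm \<phi> y = ginv_block y"
  using ginv_unique[OF frame_indep_phi is_ginv_phi] by blast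

section \<open>Mean curvature and the field \<open>JH\<close>\<close>

abbreviation "tan1 y \<equiv> tanproj n1 (n1+1) \<psi>1 (p y)"
abbreviation "tan2 y \<equiv> tanproj n2 (n2+1) \<psi>2 (q y)"

definition "time_part y u w = c\<delta>^2 * cinner (n1+1) u (\<lambda>j. \<i> * of_real \<omega>1 * \<psi>1 (p y) j)
    + s\<delta>^2 * cinner (n2+1) w (\<lambda>j. - \<i> * of_real \<omega>2 * \<psi>2 (q y) j)"

lemma cinner_vpd_phi_time: "y \<in> D \<Longrightarrow> agree v (join_vec (y 0) u w) \<Longrightarrow> cinner mm v (vpd 0 \<phi> y) = time_part y u w"
  unfolding time_part_def using cinner_agree[OF _ vpd_phi_time] cinner_join_vec by metis

lemma cinner_vpd_phi_fst: "y \<in> D \<Longrightarrow> b < n1 \<Longrightarrow> agree v (join_vec (y 0) u w)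
    \<Longrightarrow> cinner mm v (vpd (Suc b) \<phi> y) = c\<delta>^2 * cinner (n1+1) u (vpd b \<psi>1 (p y))"
  using cinner_agree[OF _ vpd_phi_fst] cinner_join_vec cinner_zero_right by
      (metis add.right_neutral mult_zero_right)

lemma cinner_vpd_phi_snd: "y \<in> D \<Longrightarrow> b < n2 \<Longrightarrow> agree v (join_vec (y 0) u w)
    \<Longrightarrow> cinner mm v (vpd (Suc (n1+b)) \<phi> y) = s\<delta>^2 * cinner (n2+1) w (vpd b \<psi>2 (q y))"
  using cinner_agree[OF _ vpd_phi_snd] cinner_join_vec cinner_zero_right by
      (metis add.left_neutral mult_zero_right)

lemma tanproj_phi_eq_block: "y \<in> D \<Longrightarrow> tanproj kk mm \<phi> y v j =
   (\<Sum>a<kk. \<Sum>b<kk. of_real (ginv_block y a b) * (of_real (cinner mm v (vpd b \<phi> y)) * vpd a \<phi> y j))"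
  by (simp only: tanproj_def ginv_phi_eq_block of_real_mult mult.assoc)

lemma tanproj_phi_fst:
  assumes y: "y \<in> D" and v: "agree v (join_vec (y 0) u w)" and j: "j < n1 + 1"
  shows "tanproj kk mm \<phi> y v j = of_real c\<delta> * rot1 (y 0) * (of_real (time_part y u w / gtt) *
      (\<i> * of_real \<omega>1 * \<psi>1 (p y) j) + tan1 y u j)"
proof -
  have c0: "c\<delta> \<noteq> 0" using c\<delta>_pos by simp
  have b1: "(\<Sum>a<n1. \<Sum>b<n1. of_real (G1 y a b / c\<delta>^2) * (of_real (cinner mm v (vpd
      (Suc b) \<phi> y)) * vpd (Suc a) \<phi> y j))
      = (\<Sum>a<n1. \<Sum>b<n1. of_real c\<delta> * rot1 (y 0) * (of_real (G1 y a b * cinner (n1+1) u (vpd b \<psi>1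
        (p y))) * vpd a \<psi>1 (p y) j))"
    by (intro sum.cong refl) (simp add: cinner_vpd_phi_fst[OF y _ v, simplified]
      vpd_phi_fst_at_fst[OF y _ j] c0 power2_eq_square)
  have b2: "(\<Sum>a<n2. \<Sum>b<n2. of_real (G2 y a b / s\<delta>^2) * (of_real (cinner mm v (vpd (Suc
      (n1+b)) \<phi> y)) * vpd (Suc (n1+a)) \<phi> y j)) = 0"
    by (intro sum.neutral ballI) (simp add: vpd_phi_snd_at_fst[OF y _ j])
  show ?thesis
    unfolding tanproj_phi_eq_block[OF y] ginv_block_def double_sum_block_diag b1 b2
      cinner_vpd_phi_time[OF y v] vpd_phi_time_at_fst[OF y j]
    by (simp add: tanproj_def sum_distrib_left algebra_simps)
qed

lemma tanproj_phi_snd: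
  assumes y: "y \<in> D" and v: "agree v (join_vec (y 0) u w)" and j: "j < n2 + 1"
  shows "tanproj kk mm \<phi> y v (n1 + 1 + j)
      = of_real s\<delta> * rot2 (y 0) * (of_real (time_part y u w / gtt) *
      (- \<i> * of_real \<omega>2 * \<psi>2 (q y) j) + tan2 y w j)"
proof -
  have c0: "s\<delta> \<noteq> 0" using s\<delta>_pos by simp
  have b1: "(\<Sum>a<n1. \<Sum>b<n1. of_real (G1 y a b / c\<delta>^2) * (of_real (cinner mm v (vpd
      (Suc b) \<phi> y)) * vpd (Suc a) \<phi> y (n1 + 1 + j))) = 0"
    by (intro sum.neutral ballI) (simp add: vpd_phi_fst_at_snd[OF y _ j, simplified])
  have b2: "(\<Sum>a<n2. \<Sum>b<n2. of_real (G2 y a b / s\<delta>^2) * (of_real (cinner mm v (vpd (Suc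
      (n1+b)) \<phi> y)) * vpd (Suc (n1+a)) \<phi> y (n1 + 1 + j)))
      = (\<Sum>a<n2. \<Sum>b<n2. of_real s\<delta> * rot2 (y 0) * (of_real (G2 y a b * cinner (n2+1) w (vpd b \<psi>2
        (q y))) * vpd a \<psi>2 (q y) j))"
    by (intro sum.cong refl) (simp add: cinner_vpd_phi_snd[OF y _ v, simplified]
      vpd_phi_snd_at_snd[OF y _ j, simplified] c0 power2_eq_square)
  show ?thesis
    unfolding tanproj_phi_eq_block[OF y] ginv_block_def double_sum_block_diag b1 b2
      cinner_vpd_phi_time[OF y v] vpd_phi_time_at_snd[OF y j]
    by (simp add: tanproj_def sum_distrib_left algebra_simps)
qed

definition "radial_part y u w = c\<delta>^2 * cinner (n1+1) u (\<psi>1 (p y)) + s\<delta>^2 * cinner (n2+1) w (\<psi>2 (q y))"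

lemma cinner_phi_radial: "agree v (join_vec (y 0) u w) \<Longrightarrow> cinner mm v (\<phi> y) = radial_part y u w"
  unfolding radial_part_def using cinner_agree[of v "join_vec
      (y 0) u w" "\<phi> y" "\<phi> y"] cinner_join_vec phi_join_vec
  by (metis agree_def)

definition "nproj_fst y u w = (\<lambda>j. u j - (of_real (time_part y u w / gtt) * (\<i> * of_real \<omega>1 * \<psi>1
    (p y) j) + tan1 y u j) - of_real (radial_part y u w) * \<psi>1 (p y) j)"
definition "nproj_snd y u w = (\<lambda>j. w j - (of_real (time_part y u w / gtt) * (- \<i> * of_real \<omega>2 * \<psi>2
    (q y) j) + tan2 y w j) - of_real (radial_part y u w) * \<psi>2 (q y) j)"

lemma nproj_phi_fst:
  assumes y: "y \<in> D" and v: "agree v (join_vec (y 0) u w)" and j: "j < n1 + 1"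
  shows "nproj kk mm \<phi> y v j = of_real c\<delta> * rot1 (y 0) * nproj_fst y u w j"
proof -
  have vj: "v j = of_real c\<delta> * rot1 (y 0) * u j" using agree_join_vec_fst[OF v j] .
  have pj: "\<phi> y j = of_real c\<delta> * rot1 (y 0) * \<psi>1 (p y) j" using j by (simp add: phi_eq)
  show ?thesis unfolding nproj_fst_def nproj_def tanproj_phi_fst[OF y v j]
      cinner_phi_radial[of v y u w, OF v] vj pj
    by (simp add: algebra_simps)
qed

lemma nproj_phi_snd:
  assumes y: "y \<in> D" and v: "agree v (join_vec (y 0) u w)" and j: "j < n2 + 1"
  shows "nproj kk mm \<phi> y v (n1 + 1 + j) = of_real s\<delta> * rot2 (y 0) * nproj_snd y u w j"
proof -
  have vj: "v (n1 + 1 + j) = of_real s\<delta> * rot2 (y 0) * w j" using agree_join_vec_snd[OF v j] .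
  have pj: "\<phi> y (n1 + 1 + j) = of_real s\<delta> * rot2 (y 0) * \<psi>2 (q y) j" by (simp add: phi_eq)
  show ?thesis unfolding nproj_snd_def nproj_def tanproj_phi_snd[OF y v j]
      cinner_phi_radial[of v y u w, OF v] vj pj
    by (simp add: algebra_simps)
qed

lemma nproj_phi:
  assumes y: "y \<in> D" and v: "agree v (join_vec (y 0) u w)"
  shows "agree (nproj kk mm \<phi> y v) (join_vec (y 0) (nproj_fst y u w) (nproj_snd y u w))"
  unfolding agree_def
proof (intro allI impI)
  fix j assume j: "j < mm"
  show "nproj kk mm \<phi> y v j = join_vec (y 0) (nproj_fst y u w) (nproj_snd y u w) j"
  proof (cases "j < n1 + 1")
    case True
    show ?thesis unfolding nproj_phi_fst[OF y v True] join_vec_def using True by simp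
  next
    case False
    define j' where "j' = j - (n1 + 1)"
    have jj: "j = n1 + 1 + j'" "j' < n2 + 1" using False j unfolding j'_def by auto
    show ?thesis unfolding jj(1) nproj_phi_snd[OF y v jj(2)] join_vec_def by simp
  qed
qed

abbreviation "V1 y \<equiv> hess_trace n1 (n1+1) \<psi>1 (p y)"
abbreviation "V2 y \<equiv> hess_trace n2 (n2+1) \<psi>2 (q y)"
definition "hess1 y = (\<lambda>j. of_real (- (\<omega>1^2) / gtt) * \<psi>1 (p y) j + of_real (1 / c\<delta>^2) * V1 y j)"
definition "hess2 y = (\<lambda>j. of_real (- (\<omega>2^2) / gtt) * \<psi>2 (q y) j + of_real (1 / s\<delta>^2) * V2 y j)"

lemma hess_trace_phi_eq_block: "y \<in> D
    \<Longrightarrow> hess_trace kk mm \<phi> y j = (\<Sum>a<kk. \<Sum>b<kk. of_real (ginv_block y a b) * vpd a (vpd b \<phi>) y j)"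
  by (simp only: hess_trace_def ginv_phi_eq_block)

lemma hess_trace_phi: assumes y: "y \<in> D" shows "agree (hess_trace kk mm \<phi> y) (join_vec
    (y 0) (hess1 y) (hess2 y))"
  unfolding agree_def
proof (intro allI impI)
  fix j assume j: "j < mm"
  have c0: "c\<delta> \<noteq> 0" "s\<delta> \<noteq> 0" using c\<delta>_pos s\<delta>_pos by auto
  show "hess_trace kk mm \<phi> y j = join_vec (y 0) (hess1 y) (hess2 y) j"
  proof (cases "j < n1 + 1")
    case True
    have b1: "(\<Sum>a<n1. \<Sum>b<n1. of_real (G1 y a b / c\<delta>^2) * vpd (Suc a) (vpd (Suc b) \<phi>) y j)
      = (\<Sum>a<n1. \<Sum>b<n1. of_real c\<delta> * rot1 (y 0) * (of_real (1 / c\<delta>^2) * (of_real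
        (G1 y a b) * vpd a (vpd b \<psi>1) (p y) j)))"
      by (intro sum.cong refl) (simp add: agree_join_vec_fst[OF vpd2_phi_fst[OF y] True])
    have b2: "(\<Sum>a<n2. \<Sum>b<n2. of_real (G2 y a b / s\<delta>^2) * vpd (Suc (n1+a)) (vpd (Suc (n1+b)) \<phi>) y j) = 0"
      by (intro sum.neutral ballI) (simp add: agree_join_vec_fst[OF vpd2_phi_snd[OF y] True])
    show ?thesis
      unfolding hess_trace_phi_eq_block[OF y] ginv_block_def double_sum_block_diag b1 b2
        agree_join_vec_fst[OF vpd2_phi_time[OF y] True]
      using True by (simp add: join_vec_def hess1_def hess_trace_def sum_distrib_left algebra_simps)
  next
    case False
    define j' where "j' = j - (n1 + 1)"
    have jj: "j = n1 + 1 + j'" "j' < n2 + 1" using False j unfolding j'_def by auto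
    have b1: "(\<Sum>a<n1. \<Sum>b<n1. of_real (G1 y a b / c\<delta>^2) * vpd (Suc a) (vpd (Suc b) \<phi>) y (n1 + 1 + j')) = 0"
      by (intro sum.neutral ballI) (simp add: agree_join_vec_snd[OF vpd2_phi_fst[OF y] jj(2), simplified])
    have b2: "(\<Sum>a<n2. \<Sum>b<n2. of_real (G2 y a b / s\<delta>^2) * vpd (Suc (n1+a)) (vpd (Suc
      (n1+b)) \<phi>) y (n1 + 1 + j'))
      = (\<Sum>a<n2. \<Sum>b<n2. of_real s\<delta> * rot2 (y 0) * (of_real (1 / s\<delta>^2) * (of_real
        (G2 y a b) * vpd a (vpd b \<psi>2) (q y) j')))"
      by (intro sum.cong refl) (simp add: agree_join_vec_snd[OF vpd2_phi_snd[OF y] jj(2), simplified])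
    show ?thesis
      unfolding jj(1) hess_trace_phi_eq_block[OF y] ginv_block_def double_sum_block_diag b1 b2
        agree_join_vec_snd[OF vpd2_phi_time[OF y] jj(2)]
      by (simp add: join_vec_def hess2_def hess_trace_def sum_distrib_left algebra_simps)
  qed
qed

definition "nhess1 y = nproj_fst y (hess1 y) (hess2 y)"
definition "nhess2 y = nproj_snd y (hess1 y) (hess2 y)"

lemma mcurv_phi: assumes y: "y \<in> D"
  shows "agree (mcurv kk mm \<phi> y) (join_vec (y 0) (\<lambda>j. of_real (1 / real kk) * nhess1 y j)
      (\<lambda>j. of_real (1 / real kk) * nhess2 y j))"
  unfolding agree_def
proof (intro allI impI)
  fix j assume j: "j < mm"
  have "mcurv kk mm \<phi> y j = of_real (1 / real kk) * nproj kk mm \<phi> y (hess_trace kk mm \<phi> y) j" by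
      (rule mcurv_eq_nproj_hess_trace)
  also have "nproj kk mm \<phi> y (hess_trace kk mm \<phi> y) j = join_vec (y 0) (nhess1 y) (nhess2 y) j"
    using nproj_phi[OF y hess_trace_phi[OF y]] j unfolding agree_def nhess1_def nhess2_def by blast
  finally have "mcurv kk mm \<phi> y j = of_real (1 / real kk) * join_vec (y 0) (nhess1 y) (nhess2 y) j" .
  thus "mcurv kk mm \<phi> y j = join_vec (y 0) (\<lambda>j. of_real (1 / real kk) * nhess1 y j) (\<lambda>j. of_real
      (1 / real kk) * nhess2 y j) j"
    unfolding scale_join_vec .
qed

definition "Jmc1 y = Jc (\<lambda>j. of_real (1 / real kk) * nhess1 y j)"
definition "Jmc2 y = Jc (\<lambda>j. of_real (1 / real kk) * nhess2 y j)"

lemma Jc_mcurv_phi: "y \<in> D \<Longrightarrow> agree (Jc (mcurv kk mm \<phi> y)) (join_vec (y 0) (Jmc1 y) (Jmc2 y))"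
  using mcurv_phi unfolding agree_def Jmc1_def Jmc2_def Jc_join_vec[symmetric] by (auto simp: Jc_def)

lemma JHcoord_phi_eq_block: "y \<in> D
    \<Longrightarrow> JHcoord kk mm \<phi> a y = (\<Sum>b<kk. ginv_block y a b * cinner mm (Jc (mcurv kk mm \<phi> y)) (vpd b \<phi> y))"
  by (simp only: JHcoord_def ginv_phi_eq_block)

lemma JHcoord_phi_time: "y \<in> D \<Longrightarrow> JHcoord kk mm \<phi> 0 y = (1 / gtt) * time_part y (Jmc1 y) (Jmc2 y)"
proof -
  assume y: "y \<in> D"
  have "cinner mm (Jc (mcurv kk mm \<phi> y)) (vpd 0 \<phi> y) = time_part y (Jmc1 y) (Jmc2 y)"
    using cinner_vpd_phi_time[OF y Jc_mcurv_phi[OF y]] .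
  thus ?thesis unfolding JHcoord_phi_eq_block[OF y] ginv_block_def sum_block_diag_time by simp
qed

lemma JHcoord_phi_fst_eq_cinner: "y \<in> D \<Longrightarrow> a < n1
    \<Longrightarrow> JHcoord kk mm \<phi> (Suc a) y = (\<Sum>c<n1. G1 y a c * cinner (n1+1) (Jmc1 y) (vpd c \<psi>1 (p y)))"
proof -
  assume y: "y \<in> D" and a: "a < n1"
  have c0: "c\<delta> \<noteq> 0" using c\<delta>_pos by simp
  show ?thesis unfolding JHcoord_phi_eq_block[OF y] ginv_block_def sum_block_diag_fst[OF a]
    by (intro sum.cong refl) (simp add: cinner_vpd_phi_fst[OF y _ Jc_mcurv_phi[OF y], simplified] c0)
qed

lemma JHcoord_phi_snd_eq_cinner: "y \<in> D \<Longrightarrow> a < n2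
    \<Longrightarrow> JHcoord kk mm \<phi> (Suc (n1 + a)) y = (\<Sum>c<n2. G2 y a c * cinner (n2+1) (Jmc2 y) (vpd c \<psi>2 (q y)))"
proof -
  assume y: "y \<in> D" and a: "a < n2"
  have c0: "s\<delta> \<noteq> 0" using s\<delta>_pos by simp
  show ?thesis unfolding JHcoord_phi_eq_block[OF y] ginv_block_def sum_block_diag_snd[OF a]
    by (intro sum.cong refl) (simp add: cinner_vpd_phi_snd[OF y _ Jc_mcurv_phi[OF y], simplified] c0)
qed

lemma tanproj_hess1: "y \<in> D \<Longrightarrow> tan1 y (hess1 y) = (\<lambda>j. of_real (1 / c\<delta>^2) * tan1 y (V1 y) j)"
proof (rule ext)
  fix j assume y: "y \<in> D"
  show "tan1 y (hess1 y) j = of_real (1 / c\<delta>^2) * tan1 y (V1 y) j"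
    unfolding hess1_def tanproj_add tanproj_scale N1.tanproj_self[OF split1_mem[OF y]] by simp
qed

lemma tanproj_hess2: "y \<in> D \<Longrightarrow> tan2 y (hess2 y) = (\<lambda>j. of_real (1 / s\<delta>^2) * tan2 y (V2 y) j)"
proof (rule ext)
  fix j assume y: "y \<in> D"
  show "tan2 y (hess2 y) j = of_real (1 / s\<delta>^2) * tan2 y (V2 y) j"
    unfolding hess2_def tanproj_add tanproj_scale N2.tanproj_self[OF split2_mem[OF y]] by simp
qed

definition "\<kappa>1 = real n1 / (real kk * c\<delta>^2)"
definition "\<kappa>2 = real n2 / (real kk * s\<delta>^2)"

lemma cinner_Jmc1_vpd:
  assumes y: "y \<in> D" and c: "c < n1"
  shows "cinner (n1+1) (Jmc1 y) (vpd c \<psi>1 (p y)) =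
    \<kappa>1 * cinner (n1+1) (Jc (mcurv n1 (n1+1) \<psi>1 (p y))) (vpd c \<psi>1 (p y))"
proof -
  have u: "p y \<in> U1" using split1_mem[OF y] .
  have n1: "real n1 \<noteq> 0" using c by simp
  have cc0: "c\<delta> \<noteq> 0" using c\<delta>_pos by simp
  let ?L = "\<lambda>X. cinner (n1+1) (Jc X) (vpd c \<psi>1 (p y))"
  have LW: "?L (hess1 y) = (1 / c\<delta>^2) * ?L (V1 y)"
    unfolding hess1_def cinner_Jc_add cinner_Jc_scale N1.cinner_Jc_self_vpd[OF u c] by simp
  have LP: "?L (nhess1 y) = (1 / c\<delta>^2) * (?L (V1 y) - ?L (tan1 y (V1 y)))"
    unfolding nhess1_def nproj_fst_def cinner_Jc_diff cinner_Jc_add cinner_Jc_scale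
      cinner_Jc_i_scale N1.cinner_Jc_self_vpd[OF u c] N1.cinner_self_vpd[OF u c] LW tanproj_hess1[OF y]
    by (simp add: algebra_simps)
  define X where "X = ?L (V1 y) - ?L (tan1 y (V1 y))"
  have "\<kappa>1 * (1 / real n1 * X) = 1 / real kk * (1 / c\<delta>^2 * X)"
    using n1 by (simp add: \<kappa>1_def)
  thus ?thesis
    unfolding Jmc1_def cinner_Jc_scale LP N1.cinner_Jc_mcurv_vpd[OF u c] X_def[symmetric] by (rule sym)
qed

lemma cinner_Jmc2_vpd:
  assumes y: "y \<in> D" and c: "c < n2"
  shows "cinner (n2+1) (Jmc2 y) (vpd c \<psi>2 (q y)) =
    \<kappa>2 * cinner (n2+1) (Jc (mcurv n2 (n2+1) \<psi>2 (q y))) (vpd c \<psi>2 (q y))"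
proof -
  have u: "q y \<in> U2" using split2_mem[OF y] .
  have n2: "real n2 \<noteq> 0" using c by simp
  have ss0: "s\<delta> \<noteq> 0" using s\<delta>_pos by simp
  let ?L = "\<lambda>X. cinner (n2+1) (Jc X) (vpd c \<psi>2 (q y))"
  have LW: "?L (hess2 y) = (1 / s\<delta>^2) * ?L (V2 y)"
    unfolding hess2_def cinner_Jc_add cinner_Jc_scale N2.cinner_Jc_self_vpd[OF u c] by simp
  have LP: "?L (nhess2 y) = (1 / s\<delta>^2) * (?L (V2 y) - ?L (tan2 y (V2 y)))"
  proof -
    have e: "(\<lambda>j. - \<i> * of_real \<omega>2 * \<psi>2 (q y) j) = (\<lambda>j. \<i> * of_real (- \<omega>2) * \<psi>2 (q y) j)" by simp
    show ?thesis
      unfolding nhess2_def nproj_snd_def cinner_Jc_diff cinner_Jc_add cinner_Jc_scale e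
        cinner_Jc_i_scale N2.cinner_Jc_self_vpd[OF u c] N2.cinner_self_vpd[OF u c] LW tanproj_hess2[OF y]
      by (simp add: algebra_simps)
  qed
  define X where "X = ?L (V2 y) - ?L (tan2 y (V2 y))"
  have "\<kappa>2 * (1 / real n2 * X) = 1 / real kk * (1 / s\<delta>^2 * X)"
    using n2 by (simp add: \<kappa>2_def)
  thus ?thesis
    unfolding Jmc2_def cinner_Jc_scale LP N2.cinner_Jc_mcurv_vpd[OF u c] X_def[symmetric] by (rule sym)
qed

lemma JHcoord_phi_fst: "y \<in> D \<Longrightarrow> a < n1 \<Longrightarrow>
    JHcoord kk mm \<phi> (Suc a) y = \<kappa>1 * JHcoord n1 (n1+1) \<psi>1 a (p y)"
proof -
  assume y: "y \<in> D" and a: "a < n1"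
  show ?thesis unfolding JHcoord_phi_fst_eq_cinner[OF y a] JHcoord_def[of n1] sum_distrib_left
    by (rule sum.cong[OF refl], subst cinner_Jmc1_vpd[OF y], auto)
qed

lemma JHcoord_phi_snd: "y \<in> D \<Longrightarrow> a < n2 \<Longrightarrow>
    JHcoord kk mm \<phi> (Suc (n1 + a)) y = \<kappa>2 * JHcoord n2 (n2+1) \<psi>2 a (q y)"
proof -
  assume y: "y \<in> D" and a: "a < n2"
  show ?thesis unfolding JHcoord_phi_snd_eq_cinner[OF y a] JHcoord_def[of n2] sum_distrib_left
    by (rule sum.cong[OF refl], subst cinner_Jmc2_vpd[OF y], auto)
qed

section \<open>The divergence of \<open>JH\<close>\<close>

lemma JHcoord_phi_time_cong: "y \<in> D \<Longrightarrow> z \<in> D \<Longrightarrow> p z = p y \<Longrightarrow> q z = q y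
    \<Longrightarrow> JHcoord kk mm \<phi> 0 z = JHcoord kk mm \<phi> 0 y"
  unfolding JHcoord_phi_time by (simp add: Jmc1_def Jmc2_def nhess1_def nhess2_def nproj_fst_def
      nproj_snd_def hess1_def hess2_def time_part_def radial_part_def)

lemma pd_JHcoord_phi_time: assumes y: "y \<in> D" shows "pd 0 (JHcoord kk mm \<phi> 0) y = 0"
proof -
  have "has_pd 0 y (JHcoord kk mm \<phi> 0) 0"
    by (rule has_pd_const_on_line) (rule JHcoord_phi_time_cong[OF y dom_upd_time[OF y]], simp_all
      add: split1_upd0 split2_upd0)
  thus ?thesis by (rule has_pd_imp_pd_eq)
qed

lemma pd_JHcoord_phi_fst: assumes y: "y \<in> D" and a: "a < n1"
  shows "pd (Suc a) (JHcoord kk mm \<phi> (Suc a)) y = \<kappa>1 * pd a (JHcoord n1 (n1+1) \<psi>1 a) (p y)"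
proof -
  have py: "p y \<in> U1" using split1_mem[OF y] .
  have i: "Suc a < kk" using a by simp
  have h: "has_pd a (p y) (JHcoord n1 (n1+1) \<psi>1 a) (pd a (JHcoord n1 (n1+1) \<psi>1 a) (p y))"
    by (rule pd_differentiable_has_pd[OF N1.pd_differentiable_JHcoord[OF py a]])
  have "has_pd (Suc a) y (\<lambda>z. \<kappa>1 * JHcoord n1 (n1+1) \<psi>1 a (p z))
      (\<kappa>1 * pd a (JHcoord n1 (n1+1) \<psi>1 a) (p y))"
    by (intro has_pd_cmult has_pd_split1[OF a h])
  hence "has_pd (Suc a) y (JHcoord kk mm \<phi> (Suc a)) (\<kappa>1 * pd a (JHcoord n1 (n1+1) \<psi>1 a) (p y))"
    by (rule has_pd_cong_open[OF dom_open i y, rotated]) (erule JHcoord_phi_fst[OF _ a, symmetric])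
  thus ?thesis by (rule has_pd_imp_pd_eq)
qed

lemma pd_JHcoord_phi_snd: assumes y: "y \<in> D" and a: "a < n2"
  shows "pd (Suc (n1 + a)) (JHcoord kk mm \<phi> (Suc (n1 + a))) y = \<kappa>2 * pd a (JHcoord n2 (n2+1) \<psi>2 a) (q y)"
proof -
  have qy: "q y \<in> U2" using split2_mem[OF y] .
  have i: "Suc (n1 + a) < kk" using a by simp
  have h: "has_pd a (q y) (JHcoord n2 (n2+1) \<psi>2 a) (pd a (JHcoord n2 (n2+1) \<psi>2 a) (q y))"
    by (rule pd_differentiable_has_pd[OF N2.pd_differentiable_JHcoord[OF qy a]])
  have "has_pd (Suc (n1 + a)) y (\<lambda>z. \<kappa>2 * JHcoord n2 (n2+1) \<psi>2 a (q z))
      (\<kappa>2 * pd a (JHcoord n2 (n2+1) \<psi>2 a) (q y))"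
    by (intro has_pd_cmult has_pd_split2[OF a h])
  hence "has_pd (Suc (n1 + a)) y (JHcoord kk mm \<phi> (Suc (n1 + a))) (\<kappa>2 * pd a (JHcoord n2 (n2+1) \<psi>2 a) (q y))"
    by (rule has_pd_cong_open[OF dom_open i y, rotated]) (erule JHcoord_phi_snd[OF _ a, symmetric])
  thus ?thesis by (rule has_pd_imp_pd_eq)
qed

definition pd_gmet_block :: "nat \<Rightarrow> nat \<Rightarrow> nat \<Rightarrow> coord \<Rightarrow> real" where
  "pd_gmet_block i l b y = (if 0 < l \<and> l \<le> n1 \<and> 0 < b \<and> b \<le> n1 \<and> 0 < i \<and> i \<le> n1
      then c\<delta>^2 * pd (i - 1) (\<lambda>u. gmet (n1+1) \<psi>1 u (l - 1) (b - 1)) (p y)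
    else if n1 < l \<and> n1 < b \<and> n1 < i
      then s\<delta>^2 * pd (i - Suc n1) (\<lambda>u. gmet (n2+1) \<psi>2 u (l - Suc n1) (b - Suc n1)) (q y)
    else 0)"

lemma has_pd_gmet_block_fst:
  assumes y: "y \<in> D" and i: "i < kk" and b1: "0 < l \<and> l \<le> n1 \<and> 0 < b \<and> b \<le> n1"
  shows "has_pd i y (\<lambda>z. gmet_block z l b) (pd_gmet_block i l b y)"
proof -
  have py: "p y \<in> U1" using split1_mem[OF y] .
  have g: "\<And>z. gmet_block z l b = c\<delta>^2 * gmet (n1+1) \<psi>1 (p z) (l - 1) (b - 1)"
    unfolding gmet_block_def block_diag_def using b1 by auto
  consider (z) "i = 0" | (s) i' where "i = Suc i'" "i' < n1" | (t) i' where "i = Suc (n1 + i')" "i' < n2"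
    using coord_cases[OF i] by blast
  thus ?thesis
  proof cases
    case z
    have "pd_gmet_block i l b y = 0" unfolding pd_gmet_block_def using z by simp
    moreover have "has_pd i y (\<lambda>z. gmet_block z l b) 0"
      by (rule has_pd_const_on_line) (simp add: g z split1_upd0)
    ultimately show ?thesis by simp
  next
    case s
    have l1: "l - 1 < n1" "b - 1 < n1" using b1 by auto
    have h: "has_pd i' (p y) (\<lambda>u. gmet (n1+1) \<psi>1 u (l - 1) (b - 1)) (pd i' (\<lambda>u. gmet
      (n1+1) \<psi>1 u (l - 1) (b - 1)) (p y))"
      by (rule pd_differentiable_has_pd[OF N1.pd_differentiable_gmet[OF py s(2) l1]])
    have "has_pd i y (\<lambda>z. c\<delta>^2 * gmet (n1+1) \<psi>1 (p z) (l - 1) (b - 1)) (c\<delta>^2 * pd i' (\<lambda>u. gmet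
      (n1+1) \<psi>1 u (l - 1) (b - 1)) (p y))"
      unfolding s(1) by (intro has_pd_cmult has_pd_split1[OF s(2) h])
    moreover have "pd_gmet_block i l b y = c\<delta>^2 * pd i' (\<lambda>u. gmet (n1+1) \<psi>1 u (l - 1) (b - 1)) (p y)"
      unfolding pd_gmet_block_def using b1 s by simp
    ultimately show ?thesis unfolding g by simp
  next
    case t
    have "pd_gmet_block i l b y = 0" unfolding pd_gmet_block_def using b1 t by simp
    moreover have "has_pd i y (\<lambda>z. gmet_block z l b) 0"
      by (rule has_pd_const_on_line) (simp add: g t split1_upd2)
    ultimately show ?thesis by simp
  qed
qed

lemma has_pd_gmet_block_snd:
  assumes y: "y \<in> D" and i: "i < kk" and l: "l < kk" and b: "b < kk" and b2: "n1 < l \<and> n1 < b"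
  shows "has_pd i y (\<lambda>z. gmet_block z l b) (pd_gmet_block i l b y)"
proof -
  have qy: "q y \<in> U2" using split2_mem[OF y] .
  have g: "\<And>z. gmet_block z l b = s\<delta>^2 * gmet (n2+1) \<psi>2 (q z) (l - Suc n1) (b - Suc n1)"
    unfolding gmet_block_def block_diag_def using b2 l b by auto
  consider (z) "i = 0" | (s) i' where "i = Suc i'" "i' < n1" | (t) i' where "i = Suc (n1 + i')" "i' < n2"
    using coord_cases[OF i] by blast
  thus ?thesis
  proof cases
    case z
    have "pd_gmet_block i l b y = 0" unfolding pd_gmet_block_def using z by simp
    moreover have "has_pd i y (\<lambda>z. gmet_block z l b) 0"
      by (rule has_pd_const_on_line) (simp add: g z split2_upd0)
    ultimately show ?thesis by simp
  next
    case s
    have "pd_gmet_block i l b y = 0" unfolding pd_gmet_block_def using b2 s by simp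
    moreover have "has_pd i y (\<lambda>z. gmet_block z l b) 0"
      by (rule has_pd_const_on_line) (simp add: g s split2_upd1)
    ultimately show ?thesis by simp
  next
    case t
    have l1: "l - Suc n1 < n2" "b - Suc n1 < n2" using b2 l b by auto
    have h: "has_pd i' (q y) (\<lambda>u. gmet (n2+1) \<psi>2 u (l - Suc n1) (b - Suc n1)) (pd i' (\<lambda>u. gmet
      (n2+1) \<psi>2 u (l - Suc n1) (b - Suc n1)) (q y))"
      by (rule pd_differentiable_has_pd[OF N2.pd_differentiable_gmet[OF qy t(2) l1]])
    have "has_pd i y (\<lambda>z. s\<delta>^2 * gmet (n2+1) \<psi>2 (q z) (l - Suc n1) (b - Suc n1)) (s\<delta>^2 * pd i'
      (\<lambda>u. gmet (n2+1) \<psi>2 u (l - Suc n1) (b - Suc n1)) (q y))"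
      unfolding t(1) by (intro has_pd_cmult has_pd_split2[OF t(2) h])
    moreover have "pd_gmet_block i l b y
      = s\<delta>^2 * pd i' (\<lambda>u. gmet (n2+1) \<psi>2 u (l - Suc n1) (b - Suc n1)) (q y)"
      unfolding pd_gmet_block_def using b2 t by simp
    ultimately show ?thesis unfolding g by simp
  qed
qed

lemma has_pd_gmet_phi:
  assumes y: "y \<in> D" and i: "i < kk" and l: "l < kk" and b: "b < kk"
  shows "has_pd i y (\<lambda>z. gmet mm \<phi> z l b) (pd_gmet_block i l b y)"
proof -
  consider "0 < l \<and> l \<le> n1 \<and> 0 < b \<and> b \<le> n1" | "n1 < l \<and> n1 < b"
    | "\<not> (0 < l \<and> l \<le> n1 \<and> 0 < b \<and> b \<le> n1)" "\<not> (n1 < l \<and> n1 < b)"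
    by blast
  hence block: "has_pd i y (\<lambda>z. gmet_block z l b) (pd_gmet_block i l b y)"
  proof cases
    case 1
    thus ?thesis by (rule has_pd_gmet_block_fst[OF y i])
  next
    case 2
    thus ?thesis by (rule has_pd_gmet_block_snd[OF y i l b])
  next
    case 3
    have "gmet_block z l b = (if l = 0 \<and> b = 0 then gtt else 0)" for z
      unfolding gmet_block_def block_diag_def using 3 l b by auto
    hence "has_pd i y (\<lambda>z. gmet_block z l b) 0" by (intro has_pd_const_on_line) simp
    moreover have "pd_gmet_block i l b y = 0" unfolding pd_gmet_block_def using 3 by auto
    ultimately show ?thesis by simp
  qed
  have "\<And>z. z \<in> D \<Longrightarrow> gmet_block z l b = gmet mm \<phi> z l b" using gmet_phi_eq_block l b by simp
  from has_pd_cong_open[OF dom_open i y this block] show ?thesis .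
qed

lemma pd_gmet_phi: "y \<in> D \<Longrightarrow> i < kk \<Longrightarrow> l < kk \<Longrightarrow> b < kk \<Longrightarrow> pd i (\<lambda>z. gmet mm \<phi> z l b) y = pd_gmet_block i l b y"
  using has_pd_gmet_phi has_pd_imp_pd_eq by blast

lemma christoffel_phi_eq_block: "y \<in> D \<Longrightarrow> a < kk \<Longrightarrow> b < kk \<Longrightarrow> christoffel kk mm \<phi> y a a b =
   (1/2) * (\<Sum>l<kk. ginv_block y a l * (pd_gmet_block a l b y
     + pd_gmet_block b l a y - pd_gmet_block l a b y))"
proof -
  assume y: "y \<in> D" and a: "a < kk" and b: "b < kk"
  show ?thesis unfolding christoffel_def ginv_phi_eq_block[OF y]
    by (intro arg_cong[where f="\<lambda>x. (1/2) * x"] sum.cong refl)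
       (simp only: lessThan_iff pd_gmet_phi[OF y a _ b] pd_gmet_phi[OF y b _ a] pd_gmet_phi[OF y _ a b])
qed

lemma christoffel_phi_time: "y \<in> D \<Longrightarrow> b < kk \<Longrightarrow> christoffel kk mm \<phi> y 0 0 b = 0"
proof -
  assume y: "y \<in> D" and b: "b < kk"
  have k: "0 < kk" by simp
  show ?thesis unfolding christoffel_phi_eq_block[OF y k b] ginv_block_def sum_block_diag_time by
      (simp add: pd_gmet_block_def)
qed

lemma christoffel_phi_fst: assumes y: "y \<in> D" and a: "a < n1" and b: "b < kk"
  shows "christoffel kk mm \<phi> y (Suc a) (Suc a) b =
     (if b = 0 then 0 else if b \<le> n1 then christoffel n1 (n1+1) \<psi>1 (p y) a a (b - 1) else 0)"
proof -
  have c0: "c\<delta> \<noteq> 0" using c\<delta>_pos by simp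
  have "christoffel kk mm \<phi> y (Suc a) (Suc a) b = (1/2) * (\<Sum>l<n1. G1 y a l / c\<delta>^2 *
      (pd_gmet_block (Suc a) (Suc l) b y
        + pd_gmet_block b (Suc l) (Suc a) y - pd_gmet_block (Suc l) (Suc a) b y))"
    using christoffel_phi_eq_block[OF y _ b, of "Suc a"] a
      unfolding ginv_block_def sum_block_diag_fst[OF a] by simp
  also have "\<dots> = (if b = 0 then 0 else if b \<le> n1 then christoffel n1 (n1+1) \<psi>1 (p y) a a (b - 1) else 0)"
  proof -
    consider (z) "b = 0" | (s) b' where "b = Suc b'" "b' < n1" | (t) b' where "b = Suc (n1 + b')" "b' < n2"
      using coord_cases[OF b] by blast
    thus ?thesis
    proof cases
      case z thus ?thesis by (simp add: pd_gmet_block_def)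
    next
      case s
      have "(\<Sum>l<n1. G1 y a l / c\<delta>^2 * (pd_gmet_block (Suc a) (Suc l) b y
        + pd_gmet_block b (Suc l) (Suc a) y - pd_gmet_block (Suc l) (Suc a) b y))
         = (\<Sum>l<n1. G1 y a l * (pd a (\<lambda>u. gmet (n1+1) \<psi>1 u l b') (p y) + pd b' (\<lambda>u. gmet (n1+1) \<psi>1 u l a) (p y)
               - pd l (\<lambda>u. gmet (n1+1) \<psi>1 u a b') (p y)))"
      proof (rule sum.cong[OF refl])
        fix l assume "l \<in> {..<n1}"
        hence l: "l < n1" by simp
        have "pd_gmet_block (Suc a) (Suc l) b y = c\<delta>^2 * pd a (\<lambda>u. gmet (n1+1) \<psi>1 u l b') (p y)"
          "pd_gmet_block b (Suc l) (Suc a) y = c\<delta>^2 * pd b' (\<lambda>u. gmet (n1+1) \<psi>1 u l a) (p y)"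
          "pd_gmet_block (Suc l) (Suc a) b y = c\<delta>^2 * pd l (\<lambda>u. gmet (n1+1) \<psi>1 u a b') (p y)"
          unfolding pd_gmet_block_def s(1) using l a s(2) by simp_all
        thus "G1 y a l / c\<delta>^2 * (pd_gmet_block (Suc a) (Suc l) b y
          + pd_gmet_block b (Suc l) (Suc a) y - pd_gmet_block (Suc l) (Suc a) b y)
          = G1 y a l * (pd a (\<lambda>u. gmet (n1+1) \<psi>1 u l b') (p y) + pd b' (\<lambda>u. gmet (n1+1) \<psi>1 u l a) (p y)
               - pd l (\<lambda>u. gmet (n1+1) \<psi>1 u a b') (p y))"
          using c0 by (simp add: field_simps)
      qed
      thus ?thesis unfolding christoffel_def using s by simp
    next
      case t thus ?thesis using a by (simp add: pd_gmet_block_def)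
    qed
  qed
  finally show ?thesis .
qed

lemma christoffel_phi_snd: assumes y: "y \<in> D" and a: "a < n2" and b: "b < kk"
  shows "christoffel kk mm \<phi> y (Suc (n1 + a)) (Suc (n1 + a)) b =
     (if n1 < b then christoffel n2 (n2+1) \<psi>2 (q y) a a (b - Suc n1) else 0)"
proof -
  have c0: "s\<delta> \<noteq> 0" using s\<delta>_pos by simp
  have "christoffel kk mm \<phi> y (Suc (n1 + a)) (Suc (n1 + a)) b = (1/2) * (\<Sum>l<n2. G2 y a l / s\<delta>^2 *
      (pd_gmet_block (Suc (n1 + a)) (Suc (n1 + l)) b y + pd_gmet_block b (Suc (n1 + l)) (Suc (n1
        + a)) y - pd_gmet_block (Suc (n1 + l)) (Suc (n1 + a)) b y))"
    using christoffel_phi_eq_block[OF y _ b, of "Suc (n1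
      + a)"] a unfolding ginv_block_def sum_block_diag_snd[OF a] by simp
  also have "\<dots> = (if n1 < b then christoffel n2 (n2+1) \<psi>2 (q y) a a (b - Suc n1) else 0)"
  proof -
    consider (z) "b = 0" | (s) b' where "b = Suc b'" "b' < n1" | (t) b' where "b = Suc (n1 + b')" "b' < n2"
      using coord_cases[OF b] by blast
    thus ?thesis
    proof cases
      case z thus ?thesis by (simp add: pd_gmet_block_def)
    next
      case s thus ?thesis using a by (simp add: pd_gmet_block_def)
    next
      case t
      have "(\<Sum>l<n2. G2 y a l / s\<delta>^2 * (pd_gmet_block (Suc (n1 + a)) (Suc (n1 + l)) b y
        + pd_gmet_block b (Suc (n1 + l)) (Suc (n1 + a)) y - pd_gmet_block (Suc (n1 + l)) (Suc (n1 + a)) b y))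
         = (\<Sum>l<n2. G2 y a l * (pd a (\<lambda>u. gmet (n2+1) \<psi>2 u l b') (q y) + pd b' (\<lambda>u. gmet (n2+1) \<psi>2 u l a) (q y)
               - pd l (\<lambda>u. gmet (n2+1) \<psi>2 u a b') (q y)))"
      proof (rule sum.cong[OF refl])
        fix l assume "l \<in> {..<n2}"
        hence l: "l < n2" by simp
        have "pd_gmet_block (Suc (n1 + a)) (Suc (n1 + l)) b y = s\<delta>^2 * pd a (\<lambda>u. gmet (n2+1) \<psi>2 u l b') (q y)"
          "pd_gmet_block b (Suc (n1 + l)) (Suc (n1 + a)) y = s\<delta>^2 * pd b' (\<lambda>u. gmet (n2+1) \<psi>2 u l a) (q y)"
          "pd_gmet_block (Suc (n1 + l)) (Suc (n1 + a)) b y = s\<delta>^2 * pd l (\<lambda>u. gmet (n2+1) \<psi>2 u a b') (q y)"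
          unfolding pd_gmet_block_def t(1) using l a t(2) by simp_all
        thus "G2 y a l / s\<delta>^2 * (pd_gmet_block (Suc (n1 + a)) (Suc (n1 + l)) b y
          + pd_gmet_block b (Suc (n1 + l)) (Suc (n1 + a)) y - pd_gmet_block (Suc (n1 + l)) (Suc (n1 + a)) b y)
          = G2 y a l * (pd a (\<lambda>u. gmet (n2+1) \<psi>2 u l b') (q y) + pd b' (\<lambda>u. gmet (n2+1) \<psi>2 u l a) (q y)
               - pd l (\<lambda>u. gmet (n2+1) \<psi>2 u a b') (q y))"
          using c0 by (simp add: field_simps)
      qed
      thus ?thesis unfolding christoffel_def using t by simp
    qed
  qed
  finally show ?thesis .
qed


lemma divJH_term_phi_time: "y \<in> D \<Longrightarrow> divJH_term kk mm \<phi> y 0 = 0"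
  using pd_JHcoord_phi_time christoffel_phi_time unfolding divJH_term_def by (simp add: sum.neutral)

lemma divJH_term_phi_fst:
  assumes y: "y \<in> D" and a: "a < n1"
  shows "divJH_term kk mm \<phi> y (Suc a) = \<kappa>1 * divJH_term n1 (n1+1) \<psi>1 (p y) a"
proof -
  let ?X = "\<lambda>b. JHcoord kk mm \<phi> b y"
  have s1: "(\<Sum>b<n1. christoffel kk mm \<phi> y (Suc a) (Suc a) (Suc b) * ?X (Suc b)) =
      (\<Sum>b<n1. \<kappa>1 * (christoffel n1 (n1+1) \<psi>1 (p y) a a b * JHcoord n1 (n1+1) \<psi>1 b (p y)))"
  proof (rule sum.cong[OF refl])
    fix b assume "b \<in> {..<n1}"
    hence b: "b < n1" by simp
    have bk: "Suc b < kk" using b by simp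
    show "christoffel kk mm \<phi> y (Suc a) (Suc a) (Suc b) * ?X (Suc b)
      = \<kappa>1 * (christoffel n1 (n1+1) \<psi>1 (p y) a a b * JHcoord n1 (n1+1) \<psi>1 b (p y))"
      unfolding christoffel_phi_fst[OF y a bk] JHcoord_phi_fst[OF y b] using b by simp
  qed
  have s2: "(\<Sum>b<n2. christoffel kk mm \<phi> y (Suc a) (Suc a) (Suc (n1 + b)) * ?X (Suc (n1 + b))) = 0"
  proof (rule sum.neutral, intro ballI)
    fix b assume "b \<in> {..<n2}"
    hence bk: "Suc (n1 + b) < kk" by simp
    show "christoffel kk mm \<phi> y (Suc a) (Suc a) (Suc (n1 + b)) * ?X (Suc (n1 + b)) = 0"
      unfolding christoffel_phi_fst[OF y a bk] by simp
  qed
  have s0: "christoffel kk mm \<phi> y (Suc a) (Suc a) 0 * ?X 0 = 0"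
    using christoffel_phi_fst[OF y a, of 0] by simp
  show ?thesis unfolding divJH_term_def sum_split_coords[of "\<lambda>b. christoffel kk mm \<phi> y (Suc a)
      (Suc a) b * ?X b"] s0 s1 s2
    pd_JHcoord_phi_fst[OF y a] by (simp add: sum_distrib_left algebra_simps)
qed

lemma divJH_term_phi_snd:
  assumes y: "y \<in> D" and a: "a < n2"
  shows "divJH_term kk mm \<phi> y (Suc (n1 + a)) = \<kappa>2 * divJH_term n2 (n2+1) \<psi>2 (q y) a"
proof -
  let ?X = "\<lambda>b. JHcoord kk mm \<phi> b y"
  have s2: "(\<Sum>b<n2. christoffel kk mm \<phi> y (Suc (n1 + a)) (Suc (n1 + a)) (Suc (n1 + b)) * ?X (Suc (n1 + b))) =
      (\<Sum>b<n2. \<kappa>2 * (christoffel n2 (n2+1) \<psi>2 (q y) a a b * JHcoord n2 (n2+1) \<psi>2 b (q y)))"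
  proof (rule sum.cong[OF refl])
    fix b assume "b \<in> {..<n2}"
    hence b: "b < n2" by simp
    have bk: "Suc (n1 + b) < kk" using b by simp
    show "christoffel kk mm \<phi> y (Suc (n1 + a)) (Suc (n1 + a)) (Suc (n1 + b)) * ?X (Suc (n1 + b))
      = \<kappa>2 * (christoffel n2 (n2+1) \<psi>2 (q y) a a b * JHcoord n2 (n2+1) \<psi>2 b (q y))"
      unfolding christoffel_phi_snd[OF y a bk] JHcoord_phi_snd[OF y b] using b by simp
  qed
  have s1: "(\<Sum>b<n1. christoffel kk mm \<phi> y (Suc (n1 + a)) (Suc (n1 + a)) (Suc b) * ?X (Suc b)) = 0"
  proof (rule sum.neutral, intro ballI)
    fix b assume "b \<in> {..<n1}"
    hence b: "b < n1" and bk: "Suc b < kk" by auto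
    show "christoffel kk mm \<phi> y (Suc (n1 + a)) (Suc (n1 + a)) (Suc b) * ?X (Suc b) = 0"
      unfolding christoffel_phi_snd[OF y a bk] using b by simp
  qed
  have s0: "christoffel kk mm \<phi> y (Suc (n1 + a)) (Suc (n1 + a)) 0 * ?X 0 = 0"
    using christoffel_phi_snd[OF y a, of 0] by simp
  show ?thesis unfolding divJH_term_def sum_split_coords[of "\<lambda>b. christoffel kk mm \<phi> y (Suc (n1
      + a)) (Suc (n1 + a)) b * ?X b"] s0 s1 s2
    pd_JHcoord_phi_snd[OF y a] by (simp add: sum_distrib_left algebra_simps)
qed

lemma divJH_phi: assumes y: "y \<in> D"
  shows "divJH kk mm \<phi> y = \<kappa>1 * divJH n1 (n1+1) \<psi>1 (p y) + \<kappa>2 * divJH n2 (n2+1) \<psi>2 (q y)"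
proof -
  have "(\<Sum>a<n1. divJH_term kk mm \<phi> y (Suc a)) = \<kappa>1 * divJH n1 (n1+1) \<psi>1 (p y)"
    unfolding divJH_eq_sum_divJH_term sum_distrib_left
    by (rule sum.cong[OF refl]) (rule divJH_term_phi_fst[OF y], simp)
  moreover have "(\<Sum>a<n2. divJH_term kk mm \<phi> y (Suc (n1 + a))) = \<kappa>2 * divJH n2 (n2+1) \<psi>2 (q y)"
    unfolding divJH_eq_sum_divJH_term sum_distrib_left
    by (rule sum.cong[OF refl]) (rule divJH_term_phi_snd[OF y], simp)
  ultimately show ?thesis
    unfolding divJH_eq_sum_divJH_term[of kk] sum_split_coords divJH_term_phi_time[OF y] by simp
qed

section \<open>Minimality at the balanced angle\<close>

lemma \<omega>1_sq_div_gtt: "\<omega>1^2 / gtt = s\<delta>^2 / c\<delta>^2"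
proof -
  have c0: "c\<delta>^2 \<noteq> 0" using c\<delta>_pos by simp
  have l0: "gtt \<noteq> 0" using gtt_pos by simp
  have "(\<omega>1 * c\<delta>^2)^2 = (\<omega>2 * s\<delta>^2)^2" using \<omega>_balance by simp
  hence h: "\<omega>2^2 * s\<delta>^2 * s\<delta>^2
      = \<omega>1^2 * c\<delta>^2 * c\<delta>^2" by (simp add: power_mult_distrib power2_eq_square mult_ac)
  have "s\<delta>^2 * gtt = s\<delta>^2 * (\<omega>1^2 * c\<delta>^2) + \<omega>2^2 * s\<delta>^2 * s\<delta>^2" unfolding gtt_def by (simp add: algebra_simps)
  also have "\<dots> = s\<delta>^2 * (\<omega>1^2 * c\<delta>^2) + \<omega>1^2 * c\<delta>^2 * c\<delta>^2" unfolding h ..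
  also have "\<dots> = \<omega>1^2 * c\<delta>^2 * (s\<delta>^2 + c\<delta>^2)" by (simp add: algebra_simps)
  also have "\<dots> = \<omega>1^2 * c\<delta>^2" using cos_sin_sq by simp
  finally have "\<omega>1^2 * c\<delta>^2 = s\<delta>^2 * gtt" by simp
  thus ?thesis using c0 l0 by (simp add: field_simps)
qed

lemma \<omega>2_sq_div_gtt: "\<omega>2^2 / gtt = c\<delta>^2 / s\<delta>^2"
proof -
  have s0: "s\<delta>^2 \<noteq> 0" using s\<delta>_pos by simp
  have l0: "gtt \<noteq> 0" using gtt_pos by simp
  have "(\<omega>1 * c\<delta>^2)^2 = (\<omega>2 * s\<delta>^2)^2" using \<omega>_balance by simp
  hence h: "\<omega>1^2 * c\<delta>^2 * c\<delta>^2
      = \<omega>2^2 * s\<delta>^2 * s\<delta>^2" by (simp add: power_mult_distrib power2_eq_square mult_ac)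
  have "c\<delta>^2 * gtt = \<omega>1^2 * c\<delta>^2 * c\<delta>^2 + c\<delta>^2 * (\<omega>2^2 * s\<delta>^2)" unfolding gtt_def by (simp add: algebra_simps)
  also have "\<dots> = \<omega>2^2 * s\<delta>^2 * s\<delta>^2 + c\<delta>^2 * (\<omega>2^2 * s\<delta>^2)" unfolding h ..
  also have "\<dots> = \<omega>2^2 * s\<delta>^2 * (s\<delta>^2 + c\<delta>^2)" by (simp add: algebra_simps)
  also have "\<dots> = \<omega>2^2 * s\<delta>^2" using cos_sin_sq by simp
  finally have "\<omega>2^2 * s\<delta>^2 = c\<delta>^2 * gtt" by simp
  thus ?thesis using s0 l0 by (simp add: field_simps)
qed

lemma balanced_coefficients:
  assumes c2: "c\<delta>^2 = (real n1 + 1) / (real n1 + real n2 + 2)"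
  shows "real kk - \<omega>1^2 / gtt - real n1 / c\<delta>^2 = 0" and "real kk - \<omega>2^2 / gtt - real n2 / s\<delta>^2 = 0"
proof -
  have s2: "s\<delta>^2 = (real n2 + 1) / (real n1 + real n2 + 2)"
    using cos_sin_sq c2 by (simp add: field_simps)
  have c0: "c\<delta>^2 \<noteq> 0" "s\<delta>^2 \<noteq> 0" using c\<delta>_pos s\<delta>_pos by auto
  show "real kk - \<omega>1^2 / gtt - real n1 / c\<delta>^2 = 0"
  proof -
    have "real kk - \<omega>1^2 / gtt - real n1 / c\<delta>^2 = (real kk * c\<delta>^2 - s\<delta>^2 - real n1) / c\<delta>^2"
      unfolding \<omega>1_sq_div_gtt using c0 by (simp add: field_simps)
    also have "real kk * c\<delta>^2 - s\<delta>^2 - real n1 = 0" by (rule balanced_angle_identity[OF c2 s2])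
    finally show ?thesis by simp
  qed
  have s2': "s\<delta>^2 = (real n2 + 1) / (real n2 + real n1 + 2)" using s2 by (simp add: add_ac)
  have c2': "c\<delta>^2 = (real n1 + 1) / (real n2 + real n1 + 2)" using c2 by (simp add: add_ac)
  show "real kk - \<omega>2^2 / gtt - real n2 / s\<delta>^2 = 0"
  proof -
    have "real kk - \<omega>2^2 / gtt - real n2 / s\<delta>^2 = (real (n2 + n1 + 1) * s\<delta>^2 - c\<delta>^2 - real n2) / s\<delta>^2"
      unfolding \<omega>2_sq_div_gtt using c0 by (simp add: field_simps)
    also have "real (n2 + n1 + 1) * s\<delta>^2 - c\<delta>^2 - real n2 = 0" by (rule balanced_angle_identity[OF s2' c2'])
    finally show ?thesis by simp
  qed
qed

context
  assumes mc1: "\<forall>x\<in>U1. \<forall>j<n1+1. mcurv n1 (n1+1) \<psi>1 x j = 0"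
    and mc2: "\<forall>x\<in>U2. \<forall>j<n2+1. mcurv n2 (n2+1) \<psi>2 x j = 0"
begin

lemma time_part_hess: assumes y: "y \<in> D" shows "time_part y (hess1 y) (hess2 y) = 0"
proof -
  have py: "p y \<in> U1" and qy: "q y \<in> U2" using split1_mem[OF y] split2_mem[OF y] .
  have e1: "(\<lambda>j. \<i> * of_real \<omega>1 * \<psi>1 (p y) j) = (\<lambda>j. of_real \<omega>1 * Jc (\<psi>1 (p y)) j)"
    by (auto simp: Jc_def mult_ac)
  have e2: "(\<lambda>j. - \<i> * of_real \<omega>2 * \<psi>2 (q y) j) = (\<lambda>j. of_real (- \<omega>2) * Jc (\<psi>2 (q y)) j)"
    by (auto simp: Jc_def mult_ac)
  have z1: "cinner (n1+1) (hess_trace n1 (n1+1) \<psi>1 (p y)) (Jc (\<psi>1 (p y))) = 0"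
    by (rule N1.cinner_hess_trace_Jc[OF py]) (use mc1 py in blast)
  have z2: "cinner (n2+1) (hess_trace n2 (n2+1) \<psi>2 (q y)) (Jc (\<psi>2 (q y))) = 0"
    by (rule N2.cinner_hess_trace_Jc[OF qy]) (use mc2 qy in blast)
  show ?thesis unfolding time_part_def e1 e2 cinner_scale_right hess1_def hess2_def
      cinner_add_left cinner_scale_left
    z1 z2 cinner_Jc_right_self by simp
qed

lemma radial_part_hess: assumes y: "y \<in> D" shows "radial_part y (hess1 y) (hess2 y) = - real kk"
proof -
  have py: "p y \<in> U1" and qy: "q y \<in> U2" using split1_mem[OF y] split2_mem[OF y] .
  have c0: "c\<delta>^2 \<noteq> 0" "s\<delta>^2 \<noteq> 0" using c\<delta>_pos s\<delta>_pos by auto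
  have l0: "gtt \<noteq> 0" using gtt_pos by simp
  have "radial_part y (hess1 y) (hess2 y) = c\<delta>^2 * (- (\<omega>1^2) / gtt + 1 / c\<delta>^2 * (- real n1))
      + s\<delta>^2 * (- (\<omega>2^2) / gtt + 1 / s\<delta>^2 * (- real n2))"
    unfolding radial_part_def hess1_def hess2_def cinner_add_left cinner_scale_left
      N1.cinner_self_eq_1[OF py] N2.cinner_self_eq_1[OF qy]
      N1.cinner_hess_trace_self[OF py] N2.cinner_hess_trace_self[OF qy] by simp
  also have "\<dots> = - ((\<omega>1^2 * c\<delta>^2 + \<omega>2^2 * s\<delta>^2) / gtt) - real n1 - real n2"
    using c0 l0 by (simp add: field_simps)
  also have "\<dots> = - real kk" unfolding gtt_def[symmetric] using l0 by simp
  finally show ?thesis .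
qed

lemma nhess1_eq: assumes y: "y \<in> D" and j: "j < n1 + 1"
  shows "nhess1 y j = of_real (real kk - \<omega>1^2 / gtt - real n1 / c\<delta>^2) * \<psi>1 (p y) j"
proof -
  have py: "p y \<in> U1" using split1_mem[OF y] .
  have V: "V1 y j = tan1 y (V1 y) j + of_real (- real n1) * \<psi>1 (p y) j"
    using N1.hess_trace_decomp[OF py _ j] mc1 py N1.cinner_hess_trace_self[OF py] by simp
  show ?thesis unfolding nhess1_def nproj_fst_def
      unfolding time_part_hess[OF y] radial_part_hess[OF y] tanproj_hess1[OF y] unfolding hess1_def
    by (subst V) (simp add: algebra_simps)
qed

lemma nhess2_eq: assumes y: "y \<in> D" and j: "j < n2 + 1"
  shows "nhess2 y j = of_real (real kk - \<omega>2^2 / gtt - real n2 / s\<delta>^2) * \<psi>2 (q y) j"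
proof -
  have qy: "q y \<in> U2" using split2_mem[OF y] .
  have V: "V2 y j = tan2 y (V2 y) j + of_real (- real n2) * \<psi>2 (q y) j"
    using N2.hess_trace_decomp[OF qy _ j] mc2 qy N2.cinner_hess_trace_self[OF qy] by simp
  show ?thesis unfolding nhess2_def nproj_snd_def
      unfolding time_part_hess[OF y] radial_part_hess[OF y] tanproj_hess2[OF y] unfolding hess2_def
    by (subst V) (simp add: algebra_simps)
qed

lemma minimal_phi:
  assumes "c\<delta>^2 = (real n1 + 1) / (real n1 + real n2 + 2)"
  shows "minimal kk mm D \<phi>"
  unfolding minimal_def
proof (intro ballI allI impI)
  note k1 = balanced_coefficients(1)[OF assms] and k2 = balanced_coefficients(2)[OF assms]
  fix y j assume y: "y \<in> D" and j: "j < mm"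
  have "mcurv kk mm \<phi> y j = join_vec (y 0) (\<lambda>j. of_real (1 / real kk) * nhess1 y j) (\<lambda>j. of_real
      (1 / real kk) * nhess2 y j) j"
    using mcurv_phi[OF y] j unfolding agree_def by blast
  also have "\<dots> = 0"
  proof (cases "j < n1 + 1")
    case True
    have "nhess1 y j = 0" unfolding nhess1_eq[OF y True] k1 by simp
    thus ?thesis unfolding join_vec_def using True by simp
  next
    case False
    have jj: "j - (n1 + 1) < n2 + 1" using False j by simp
    have "nhess2 y (j - (n1 + 1)) = 0" unfolding nhess2_eq[OF y jj] k2 by simp
    thus ?thesis unfolding join_vec_def using False by simp
  qed
  finally show "mcurv kk mm \<phi> y j = 0" .
qed

end

lemma C_minimal_legendrian_immersion_phi:
  assumes "C_minimal n1 (n1+1) U1 \<psi>1" and "C_minimal n2 (n2+1) U2 \<psi>2"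
  shows "C_minimal_legendrian_immersion kk D \<phi>"
proof -
  have "C_minimal kk mm D \<phi>"
    unfolding C_minimal_def
  proof
    fix y assume y: "y \<in> D"
    show "divJH kk mm \<phi> y = 0"
      using assms split1_mem[OF y] split2_mem[OF y] unfolding divJH_phi[OF y] C_minimal_def by simp
  qed
  thus ?thesis
    using immersion_phi legendrian_phi unfolding C_minimal_legendrian_immersion_def by (simp add: add.assoc)
qed

lemma minimal_legendrian_immersion_phi:
  assumes "minimal n1 (n1+1) U1 \<psi>1" and "minimal n2 (n2+1) U2 \<psi>2"
    and "c\<delta>^2 = (real n1 + 1) / (real n1 + real n2 + 2)"
  shows "minimal_legendrian_immersion kk D \<phi>"
proof -
  have "minimal kk mm D \<phi>"
    by (rule minimal_phi) (use assms in \<open>auto simp: minimal_def\<close>)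
  thus ?thesis
    using immersion_phi legendrian_phi unfolding minimal_legendrian_immersion_def by (simp add: add.assoc)
qed

end

lemma balanced_angle:
  fixes n1 n2 :: nat
  assumes "\<delta> = arctan (sqrt ((real n2 + 1) / (real n1 + 1)))"
  shows "0 < \<delta>" and "\<delta> < pi / 2" and "(cos \<delta>)^2 = (real n1 + 1) / (real n1 + real n2 + 2)"
proof -
  define x where "x = sqrt ((real n2 + 1) / (real n1 + 1))"
  have x2: "x^2 = (real n2 + 1) / (real n1 + 1)" unfolding x_def by simp
  show "0 < \<delta>" unfolding assms by (simp add: zero_less_arctan_iff)
  show "\<delta> < pi / 2" unfolding assms by (rule arctan_ubound)
  have "(cos \<delta>)^2 = 1 / (1 + x^2)"
    unfolding assms x_def[symmetric] cos_arctan by (simp add: power_divide)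
  also have "\<dots> = (real n1 + 1) / (real n1 + real n2 + 2)"
    unfolding x2 by (simp add: field_simps)
  finally show "(cos \<delta>)^2 = (real n1 + 1) / (real n1 + real n2 + 2)" .
qed

theorem corollary2:
  fixes n1 n2 :: nat
  shows "(\<forall>U1 U2 \<psi>1 \<psi>2 \<delta>.
            C_minimal_legendrian_immersion n1 U1 \<psi>1 \<and>
            C_minimal_legendrian_immersion n2 U2 \<psi>2 \<and> 0 < \<delta> \<and> \<delta> < pi / 2 \<longrightarrow>
            C_minimal_legendrian_immersion (n1 + n2 + 1) (prod_dom n1 n2 U1 U2)
              (phi_delta n1 n2 \<delta> \<psi>1 \<psi>2))
       \<and> (\<forall>U1 U2 \<psi>1 \<psi>2.
            minimal_legendrian_immersion n1 U1 \<psi>1 \<and>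
            minimal_legendrian_immersion n2 U2 \<psi>2 \<longrightarrow>
            minimal_legendrian_immersion (n1 + n2 + 1) (prod_dom n1 n2 U1 U2)
              (phi_delta n1 n2 (arctan (sqrt ((real n2 + 1) / (real n1 + 1)))) \<psi>1 \<psi>2))"
proof (intro conjI allI impI)
  fix U1 U2 \<psi>1 \<psi>2 \<delta>
  assume h: "C_minimal_legendrian_immersion n1 U1 \<psi>1 \<and>
            C_minimal_legendrian_immersion n2 U2 \<psi>2 \<and> 0 < \<delta> \<and> \<delta> < pi / 2"
  then interpret legendrian_pair n1 n2 U1 U2 \<psi>1 \<psi>2 \<delta>
    by unfold_locales (auto simp: C_minimal_legendrian_immersion_def)
  show "C_minimal_legendrian_immersion (n1 + n2 + 1) (prod_dom n1 n2 U1 U2) (phi_delta n1 n2 \<delta> \<psi>1 \<psi>2)"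
    using h by (intro C_minimal_legendrian_immersion_phi) (auto simp: C_minimal_legendrian_immersion_def)
next
  fix U1 U2 \<psi>1 \<psi>2
  assume h: "minimal_legendrian_immersion n1 U1 \<psi>1 \<and> minimal_legendrian_immersion n2 U2 \<psi>2"
  interpret legendrian_pair n1 n2 U1 U2 \<psi>1 \<psi>2 "arctan (sqrt ((real n2 + 1) / (real n1 + 1)))"
    using h balanced_angle(1,2)[OF refl] by unfold_locales (auto simp: minimal_legendrian_immersion_def)
  show "minimal_legendrian_immersion (n1 + n2 + 1) (prod_dom n1 n2 U1 U2)
      (phi_delta n1 n2 (arctan (sqrt ((real n2 + 1) / (real n1 + 1)))) \<psi>1 \<psi>2)"
    using h balanced_angle(3)[OF refl]
    by (intro minimal_legendrian_immersion_phi) (auto simp: minimal_legendrian_immersion_def c\<delta>_def)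
qed

end
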